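(* Let $\bm L=(L_1,\dots,L_r)$ be linear functionals on complex Laurent polynomials with $L_j[w^k]=L_j[w^{-k}]$ for all $k\in\mathbb N$, let $M_j[x^k]=L_j[(w+w^{-1})^k]$ define functionals $M_j$ on polynomials, and suppose $(\bm n;\bm n)$ and $(\bm n+\bm e_j;\bm n)$ are normal for $\bm L$ for all $\bm n\in\mathbb N^r$ and all $j$ (so that $\bm M=(M_1,\dots,M_r)$ is perfect). Let $a_{\bm n,j},b_{\bm n,j}$ be the nearest neighbour recurrence coefficients of $\bm M$. Then for every $\bm n\in\mathbb N^r$ and $j$ with $n_j\ge1$, $$a_{\bm n,j}=\frac{(1+\alpha_{\bm n-\bm e_j;\bm n-\bm e_j})(1-\alpha_{\bm n-\bm e_j;\bm n}^2)\rho_{\bm n;\bm n,j}}{1+\alpha_{\bm n;\bm n}},$$ $$b_{\bm n,j}=\sum_{\ell\ne j}\rho_{\bm n;\bm n,\ell}\gamma^{\ell j}_{\bm n;\bm n}+\alpha_{\bm n;\bm n-\bm e_j}-\alpha_{\bm n+\bm e_j;\bm n}-\alpha_{\bm n;\bm n}\alpha_{\bm n-\bm e_j;\bm n}-\alpha_{\bm n;\bm n}\alpha_{\bm n+\bm e_j;\bm n}.$$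
   Context: Fix $r\ge1$; $\mathbb N=\{0,1,2,\dots\}$; $\bm e_j$ the $j$-th standard unit vector; for $\bm v\in\mathbb Z^r$, $|\bm v|=v_1+\dots+v_r$ (signed). Let $c_{k,j}=L_j[w^{-k}]$. $\mathfrak C_{2r}=\{(\bm n;\bm m)\in\mathbb Z^r\times\mathbb Z^r:n_j+m_j\ge0\ \forall j\}$. For $(\bm n;\bm m)\in\mathfrak C_{2r}$, $\bm n\ne-\bm m$, $T_{\bm n;\bm m}$ is the square matrix of size $|\bm n|+|\bm m|$ with rows indexed by $(j,k)$, $1\le j\le r$, $-m_j\le k\le n_j-1$ (ordered by $j$, then increasing $k$), columns indexed by $i=-|\bm m|,\dots,|\bm n|-1$, entries $c_{k-i,j}$; $T_{\bm n;-\bm n}:=1$; normal means $\det T_{\bm n;\bm m}\ne0$. (Under the symmetry $L_j[w^k]=L_j[w^{-k}]$, $(\bm n;\bm m)$ is normal iff $(\bm m;\bm n)$ is.) For normal $(\bm n;\bm m)$, $\bm n\ne-\bm m$: $\Phi_{\bm n;\bm m}$ is the unique Laurent polynomial in $\operatorname{span}\{z^k\}_{k=-|\bm m|}^{|\bm n|}$ with $z^{|\bm n|}$-coefficient $1$ and $L_j[\Phi_{\bm n;\bm m}(w)w^{-k}]=0$ for $-m_j\le k\le n_j-1$, all $j$; $\Phi_{\bm n;-\bm n}=1$; $\alpha_{\bm n;\bm m}$ := $z^{-|\bm m|}$-coefficient of $\Phi_{\bm n;\bm m}$. $\rho_{\bm n;\bm m,\ell}=L_\ell[\Phi_{\bm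 n;\bm m}(w)w^{-n_\ell}]/L_\ell[\Phi_{\bm n-\bm e_\ell;\bm m}(w)w^{-n_\ell+1}]$ if $(\bm n-\bm e_\ell;\bm m)\in\mathfrak C_{2r}$, and $\rho_{\bm n;\bm m,\ell}=0$ otherwise. For $\ell\ne j$: $\gamma^{\ell j}_{\bm n;\bm m}=L_j[\Phi_{\bm n+\bm e_\ell;\bm m}(w)w^{-n_j}]/L_j[\Phi_{\bm n;\bm m}(w)w^{-n_j}]$, i.e. the number with $\Phi_{\bm n+\bm e_\ell;\bm m}-\Phi_{\bm n+\bm e_j;\bm m}=\gamma^{\ell j}_{\bm n;\bm m}\Phi_{\bm n;\bm m}$. For $\bm n\in\mathbb N^r$, $P_{\bm n}$ denotes the unique monic polynomial of degree $|\bm n|$ with $M_j[P_{\bm n}(x)x^k]=0$ for $0\le k\le n_j-1$, all $j$ (put $P_{\bm n-\bm e_j}:=0$ if $n_j=0$). The nearest neighbour recurrence coefficients are the complex numbers $a_{\bm n,j},b_{\bm n,k}$ such that $xP_{\bm n}(x)=P_{\bm n+\bm e_k}(x)+b_{\bm n,k}P_{\bm n}(x)+\sum_{j=1}^ra_{\bm n,j}P_{\bm n-\bm e_j}(x)$ for all $\bm n\in\mathbb N^r$ and $k=1,\dots,r$. *)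

theory Defs
  imports "Jordan_Normal_Form.Determinant" "HOL-Computational_Algebra.Polynomial"
begin

text \<open>Multi-indices are functions nat => int; only the components j < r matter
  (index j here corresponds to index j+1 in the paper).
  A family of functionals L_0..L_(r-1) on complex Laurent polynomials is given by its
  moments: mom j k = L_j[w^k] (k :: int).  Laurent polynomials are finitely supported
  coefficient functions int => complex.\<close>

definition msum :: "nat \<Rightarrow> (nat \<Rightarrow> int) \<Rightarrow> int" where
  "msum r n = (\<Sum>j<r. n j)"

definition unitv :: "nat \<Rightarrow> nat \<Rightarrow> int" where
  "unitv j = (\<lambda>i. if i = j then 1 else 0)"

definition madd :: "(nat \<Rightarrow> int) \<Rightarrow> (nat \<Rightarrow> int) \<Rightarrow> nat \<Rightarrow> int" where
  "madd n m = (\<lambda>i. n i + m i)"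

definition msub :: "(nat \<Rightarrow> int) \<Rightarrow> (nat \<Rightarrow> int) \<Rightarrow> nat \<Rightarrow> int" where
  "msub n m = (\<lambda>i. n i - m i)"

definition lsupp :: "(int \<Rightarrow> complex) \<Rightarrow> int set" where
  "lsupp p = {k. p k \<noteq> 0}"

definition Lfun :: "(nat \<Rightarrow> int \<Rightarrow> complex) \<Rightarrow> nat \<Rightarrow> (int \<Rightarrow> complex) \<Rightarrow> complex" where
  "Lfun mom j p = (\<Sum>k\<in>lsupp p. p k * mom j k)"

definition lshift :: "(int \<Rightarrow> complex) \<Rightarrow> int \<Rightarrow> (int \<Rightarrow> complex)" where
  "lshift p s = (\<lambda>k. p (k - s))"

definition lmult :: "(int \<Rightarrow> complex) \<Rightarrow> (int \<Rightarrow> complex) \<Rightarrow> (int \<Rightarrow> complex)" where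
  "lmult p q = (\<lambda>k. \<Sum>i\<in>lsupp p. p i * q (k - i))"

definition lone :: "int \<Rightarrow> complex" where
  "lone = (\<lambda>k. if k = 0 then 1 else 0)"

definition wpw :: "int \<Rightarrow> complex" where
  "wpw = (\<lambda>k. if k = 1 \<or> k = -1 then 1 else 0)"

fun lpow :: "(int \<Rightarrow> complex) \<Rightarrow> nat \<Rightarrow> (int \<Rightarrow> complex)" where
  "lpow p 0 = lone"
| "lpow p (Suc i) = lmult p (lpow p i)"

definition Trows :: "nat \<Rightarrow> (nat \<Rightarrow> int) \<Rightarrow> (nat \<Rightarrow> int) \<Rightarrow> (nat \<times> int) list" where
  "Trows r n m = concat (map (\<lambda>j. map (\<lambda>k. (j, k)) [- m j .. n j - 1]) [0..<r])"

definition Tmat :: "nat \<Rightarrow> (nat \<Rightarrow> int \<Rightarrow> complex) \<Rightarrow> (nat \<Rightarrow> int) \<Rightarrow> (nat \<Rightarrow> int) \<Rightarrow> complex mat" where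
  "Tmat r mom n m = mat (nat (msum r n + msum r m)) (nat (msum r n + msum r m))
     (\<lambda>(t, s). let jk = Trows r n m ! t; i = - msum r m + int s
              in mom (fst jk) (i - snd jk))"

definition normal :: "nat \<Rightarrow> (nat \<Rightarrow> int \<Rightarrow> complex) \<Rightarrow> (nat \<Rightarrow> int) \<Rightarrow> (nat \<Rightarrow> int) \<Rightarrow> bool" where
  "normal r mom n m = (if (\<forall>j<r. n j = - m j) then True else det (Tmat r mom n m) \<noteq> 0)"

definition Phi :: "nat \<Rightarrow> (nat \<Rightarrow> int \<Rightarrow> complex) \<Rightarrow> (nat \<Rightarrow> int) \<Rightarrow> (nat \<Rightarrow> int) \<Rightarrow> (int \<Rightarrow> complex)" where
  "Phi r mom n m = (if (\<forall>j<r. n j = - m j) then lone else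
     (THE p. (\<forall>k. p k \<noteq> 0 \<longrightarrow> - msum r m \<le> k \<and> k \<le> msum r n)
           \<and> p (msum r n) = 1
           \<and> (\<forall>j<r. \<forall>k. - m j \<le> k \<and> k \<le> n j - 1 \<longrightarrow> Lfun mom j (lshift p (- k)) = 0)))"

definition alpha :: "nat \<Rightarrow> (nat \<Rightarrow> int \<Rightarrow> complex) \<Rightarrow> (nat \<Rightarrow> int) \<Rightarrow> (nat \<Rightarrow> int) \<Rightarrow> complex" where
  "alpha r mom n m = Phi r mom n m (- msum r m)"

definition rho :: "nat \<Rightarrow> (nat \<Rightarrow> int \<Rightarrow> complex) \<Rightarrow> (nat \<Rightarrow> int) \<Rightarrow> (nat \<Rightarrow> int) \<Rightarrow> nat \<Rightarrow> complex" where
  "rho r mom n m l = (if (\<forall>j<r. (msub n (unitv l)) j + m j \<ge> 0)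
     then Lfun mom l (lshift (Phi r mom n m) (- n l))
          / Lfun mom l (lshift (Phi r mom (msub n (unitv l)) m) (- n l + 1))
     else 0)"

definition gamma :: "nat \<Rightarrow> (nat \<Rightarrow> int \<Rightarrow> complex) \<Rightarrow> (nat \<Rightarrow> int) \<Rightarrow> (nat \<Rightarrow> int) \<Rightarrow> nat \<Rightarrow> nat \<Rightarrow> complex" where
  "gamma r mom n m l j =
     Lfun mom j (lshift (Phi r mom (madd n (unitv l)) m) (- n j))
     / Lfun mom j (lshift (Phi r mom n m) (- n j))"

definition Mfun :: "(nat \<Rightarrow> int \<Rightarrow> complex) \<Rightarrow> nat \<Rightarrow> complex poly \<Rightarrow> complex" where
  "Mfun mom j p = (\<Sum>i\<le>degree p. coeff p i * Lfun mom j (lpow wpw i))"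

definition Pn :: "nat \<Rightarrow> (nat \<Rightarrow> int \<Rightarrow> complex) \<Rightarrow> (nat \<Rightarrow> int) \<Rightarrow> complex poly" where
  "Pn r mom n = (THE P. degree P = nat (msum r n) \<and> lead_coeff P = 1
     \<and> (\<forall>j<r. \<forall>k::nat. int k < n j \<longrightarrow> Mfun mom j (P * monom 1 k) = 0))"

text \<open>Convention P_{n - e_j} := 0 if n_j = 0 (i.e. P of a non-natural multi-index is 0).\<close>
definition Pm :: "nat \<Rightarrow> (nat \<Rightarrow> int \<Rightarrow> complex) \<Rightarrow> (nat \<Rightarrow> int) \<Rightarrow> complex poly" where
  "Pm r mom n = (if (\<forall>j<r. 0 \<le> n j) then Pn r mom n else 0)"

end

(*
  Substituting x = w + 1/w identifies polynomials of degree at most N with the symmetric Laurent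
  polynomials supported in [-N, N]; as the moments are symmetric, M_j[P x^k] = 0 for k < n_j
  becomes L_j[P(w + 1/w) w^t] = 0 for |t| < n_j.  Hence P_n(w + 1/w) is, up to normalization,
  the symmetrization p(w) + p(1/w) of each of Phi_{n;n}, Phi_{n;n-e_j} (and P_{n+e_j}(w + 1/w)
  that of Phi_{n+e_j;n}); the normalization 1 + alpha_{n;n} is nonzero, which together with
  perfectness is proved by induction on |n|.  Comparing the coefficients of x^|n| in the
  recurrence gives b_{n,j}, applying M_j[. x^(n_j - 1)] gives a_{n,j}.  What remains are relations
  between the Phi's, all obtained from uniqueness of solutions of normal systems: the flip
  p(w) |-> p(1/w)/w exchanges the systems (n; m) and (m; n), and sum_l rho_l gamma^{lj} comes from
  expanding w Phi_{n;n} - Phi_{n+e_j;n} in Phi_{n;n}(1/w) and the flipped Phi_{n-e_l;n}.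
*)

theory Submission
  imports Defs
begin

section \<open>Multi-indices\<close>

abbreviation incr :: "(nat \<Rightarrow> int) \<Rightarrow> nat \<Rightarrow> nat \<Rightarrow> int" where
  "incr n j \<equiv> madd n (unitv j)"

abbreviation decr :: "(nat \<Rightarrow> int) \<Rightarrow> nat \<Rightarrow> nat \<Rightarrow> int" where
  "decr n j \<equiv> msub n (unitv j)"

lemma incr_apply: "incr n j i = n i + (if i = j then 1 else 0)"
  by (simp add: madd_def unitv_def)

lemma decr_apply: "decr n j i = n i - (if i = j then 1 else 0)"
  by (simp add: msub_def unitv_def)

lemma incr_decr [simp]: "incr (decr n j) j = n"
  by (simp add: madd_def msub_def fun_eq_iff)

lemma decr_incr [simp]: "decr (incr n j) j = n"
  by (simp add: madd_def msub_def fun_eq_iff)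

lemma msum_incr: "j < r \<Longrightarrow> msum r (incr n j) = msum r n + 1"
  unfolding msum_def madd_def unitv_def by (simp add: sum.distrib)

lemma msum_decr: "j < r \<Longrightarrow> msum r (decr n j) = msum r n - 1"
  unfolding msum_def msub_def unitv_def by (simp add: sum_subtractf)

definition nonneg :: "nat \<Rightarrow> (nat \<Rightarrow> int) \<Rightarrow> bool" where
  "nonneg r n \<longleftrightarrow> (\<forall>i<r. 0 \<le> n i)"

lemma msum_nonneg: "nonneg r n \<Longrightarrow> 0 \<le> msum r n"
  unfolding msum_def nonneg_def by (auto intro!: sum_nonneg)

lemma component_le_msum: "nonneg r n \<Longrightarrow> j < r \<Longrightarrow> n j \<le> msum r n"
  unfolding msum_def nonneg_def by (intro member_le_sum) auto

lemma nonneg_incr: "nonneg r n \<Longrightarrow> nonneg r (incr n j)"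
  unfolding nonneg_def by (auto simp: incr_apply)

lemma nonneg_decr: "nonneg r n \<Longrightarrow> 1 \<le> n j \<Longrightarrow> nonneg r (decr n j)"
  unfolding nonneg_def by (auto simp: decr_apply)

lemma nonneg_decr_iff: "nonneg r n \<Longrightarrow> j < r \<Longrightarrow> nonneg r (decr n j) \<longleftrightarrow> 1 \<le> n j"
  unfolding nonneg_def by (force simp: decr_apply)

lemma msum_eq_0_iff_nonneg: "nonneg r n \<Longrightarrow> msum r n = 0 \<longleftrightarrow> (\<forall>j<r. n j = 0)"
  unfolding msum_def nonneg_def by (subst sum_nonneg_eq_0_iff) auto

definition active :: "nat \<Rightarrow> (nat \<Rightarrow> int) \<Rightarrow> nat set" where
  "active r n = {l. l < r \<and> 1 \<le> n l}"

lemma finite_active [simp]: "finite (active r n)"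
  by (simp add: active_def)

section \<open>Finitely supported Laurent polynomials\<close>

definition supp_within :: "(int \<Rightarrow> complex) \<Rightarrow> int \<Rightarrow> int \<Rightarrow> bool" where
  "supp_within p a b \<longleftrightarrow> (\<forall>k. p k \<noteq> 0 \<longrightarrow> a \<le> k \<and> k \<le> b)"

definition finsupp :: "(int \<Rightarrow> complex) \<Rightarrow> bool" where
  "finsupp p \<longleftrightarrow> (\<exists>a b. supp_within p a b)"

definition Lw :: "(nat \<Rightarrow> int \<Rightarrow> complex) \<Rightarrow> nat \<Rightarrow> (int \<Rightarrow> complex) \<Rightarrow> int \<Rightarrow> complex" where
  "Lw mom j p s = Lfun mom j (lshift p s)"

text \<open>\<open>lflip p\<close> is \<open>w\<^sup>-\<^sup>1 p(1/w)\<close>.\<close>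

definition lflip :: "(int \<Rightarrow> complex) \<Rightarrow> int \<Rightarrow> complex" where
  "lflip p = (\<lambda>k. p (- k - 1))"

lemma supp_within_mono: "supp_within p a b \<Longrightarrow> a' \<le> a \<Longrightarrow> b \<le> b' \<Longrightarrow> supp_within p a' b'"
  unfolding supp_within_def by force

lemma supp_within_outside: "supp_within p a b \<Longrightarrow> k < a \<or> b < k \<Longrightarrow> p k = 0"
  unfolding supp_within_def by force

lemma supp_within_shrink_left: "supp_within p a b \<Longrightarrow> p a = 0 \<Longrightarrow> supp_within p (a + 1) b"
  unfolding supp_within_def by (metis order.order_iff_strict zless_imp_add1_zle)

lemma supp_within_shrink_right: "supp_within p a b \<Longrightarrow> p b = 0 \<Longrightarrow> supp_within p a (b - 1)"
  unfolding supp_within_def by (metis le_less zle_diff1_eq)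

lemma supp_within_lshift: "supp_within p a b \<Longrightarrow> supp_within (lshift p t) (a + t) (b + t)"
  unfolding supp_within_def lshift_def by force

lemma supp_within_reflect: "supp_within p a b \<Longrightarrow> supp_within (\<lambda>k. p (- k)) (- b) (- a)"
  unfolding supp_within_def by force

lemma supp_within_lflip: "supp_within p a b \<Longrightarrow> supp_within (lflip p) (- b - 1) (- a - 1)"
  unfolding supp_within_def lflip_def by force

lemma supp_within_lincomb:
  "supp_within p a b \<Longrightarrow> supp_within q a b \<Longrightarrow> supp_within (\<lambda>k. c * p k + d * q k) a b"
  unfolding supp_within_def by force

lemma lflip_lflip [simp]: "lflip (lflip p) = p"
  by (simp add: lflip_def)

lemma finsupp_supp_within: "supp_within p a b \<Longrightarrow> finsupp p"
  unfolding finsupp_def by blast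

lemma finsupp_common:
  assumes "finsupp p" "finsupp q"
  obtains a b where "supp_within p a b" "supp_within q a b"
proof -
  obtain a b a' b' where "supp_within p a b" "supp_within q a' b'"
    using assms unfolding finsupp_def by blast
  then show thesis
    using that supp_within_mono
    by (meson min.cobounded1 min.cobounded2 max.cobounded1 max.cobounded2)
qed

lemma finsupp_lincomb: "finsupp p \<Longrightarrow> finsupp q \<Longrightarrow> finsupp (\<lambda>k. c * p k + d * q k)"
  by (metis finsupp_common finsupp_supp_within supp_within_lincomb)

lemma finsupp_add [simp]: "finsupp p \<Longrightarrow> finsupp q \<Longrightarrow> finsupp (\<lambda>k. p k + q k)"
  using finsupp_lincomb[of p q 1 1] by simp

lemma finsupp_diff [simp]: "finsupp p \<Longrightarrow> finsupp q \<Longrightarrow> finsupp (\<lambda>k. p k - q k)"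
  using finsupp_lincomb[of p q 1 "-1"] by simp

lemma finsupp_scale [simp]: "finsupp p \<Longrightarrow> finsupp (\<lambda>k. c * p k)"
  using finsupp_lincomb[of p p c 0] by simp

lemma finsupp_sum [simp]:
  "finite I \<Longrightarrow> (\<And>i. i \<in> I \<Longrightarrow> finsupp (f i)) \<Longrightarrow> finsupp (\<lambda>k. \<Sum>i\<in>I. f i k)"
proof (induction I rule: finite_induct)
  case empty
  then show ?case by (auto simp: finsupp_def supp_within_def)
next
  case (insert x F)
  then show ?case using finsupp_add[of "f x" "\<lambda>k. \<Sum>i\<in>F. f i k"] by simp
qed

lemma finsupp_lshift [simp]: "finsupp p \<Longrightarrow> finsupp (lshift p t)"
  unfolding finsupp_def using supp_within_lshift by blast

lemma finsupp_reflect [simp]: "finsupp p \<Longrightarrow> finsupp (\<lambda>k. p (- k))"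
  unfolding finsupp_def using supp_within_reflect by blast

lemma finsupp_lflip [simp]: "finsupp p \<Longrightarrow> finsupp (lflip p)"
  unfolding finsupp_def using supp_within_lflip by blast

lemma Lw_eq_sum:
  assumes "supp_within p a b"
  shows "Lw mom j p s = (\<Sum>k=a..b. p k * mom j (k + s))"
proof -
  have "Lw mom j p s = (\<Sum>t\<in>(\<lambda>k. k + s) ` {a..b}. lshift p s t * mom j t)"
    unfolding Lw_def Lfun_def
    by (rule sum.mono_neutral_left)
       (use assms in \<open>auto simp: lsupp_def lshift_def supp_within_def image_iff
          intro!: bexI[of _ "x - s" for x]\<close>)
  also have "\<dots> = (\<Sum>k=a..b. p k * mom j (k + s))"
    by (subst sum.reindex) (auto simp: inj_on_def lshift_def)
  finally show ?thesis .
qed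

lemma Lw_lshift: "Lw mom j (lshift p t) s = Lw mom j p (s + t)"
  unfolding Lw_def lshift_def by (simp add: algebra_simps)

lemma Lw_lincomb:
  assumes "supp_within p a b" "supp_within q a b"
  shows "Lw mom j (\<lambda>k. c * p k + d * q k) s = c * Lw mom j p s + d * Lw mom j q s"
  using assms supp_within_lincomb[OF assms, of c d]
  by (simp add: Lw_eq_sum sum_distrib_left sum.distrib algebra_simps)

lemma Lw_add [simp]:
  assumes "finsupp p" "finsupp q"
  shows "Lw mom j (\<lambda>k. p k + q k) s = Lw mom j p s + Lw mom j q s"
proof -
  obtain a b where "supp_within p a b" "supp_within q a b" using assms by (rule finsupp_common)
  then show ?thesis using Lw_lincomb[of p a b q mom j 1 1 s] by simp
qed

lemma Lw_diff [simp]: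
  assumes "finsupp p" "finsupp q"
  shows "Lw mom j (\<lambda>k. p k - q k) s = Lw mom j p s - Lw mom j q s"
proof -
  obtain a b where "supp_within p a b" "supp_within q a b" using assms by (rule finsupp_common)
  then show ?thesis using Lw_lincomb[of p a b q mom j 1 "-1" s] by simp
qed

lemma Lw_scale [simp]:
  assumes "finsupp p"
  shows "Lw mom j (\<lambda>k. c * p k) s = c * Lw mom j p s"
proof -
  obtain a b where "supp_within p a b" using assms unfolding finsupp_def by blast
  then show ?thesis using Lw_lincomb[of p a b p mom j c 0 s] by simp
qed

lemma Lw_zero [simp]: "Lw mom j (\<lambda>k. 0) s = 0"
  by (simp add: Lw_def Lfun_def lsupp_def lshift_def)

lemma Lw_sum [simp]:
  "finite I \<Longrightarrow> (\<And>i. i \<in> I \<Longrightarrow> finsupp (f i)) \<Longrightarrow>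
   Lw mom j (\<lambda>k. \<Sum>i\<in>I. f i k) s = (\<Sum>i\<in>I. Lw mom j (f i) s)"
proof (induction I rule: finite_induct)
  case (insert x F)
  then show ?case using Lw_add[of "f x" "\<lambda>k. \<Sum>i\<in>F. f i k"] by simp
qed simp

lemma Lw_delta: "Lw mom j (\<lambda>k. if k = N then 1 else 0) s = mom j (N + s)"
  by (subst Lw_eq_sum[where a = N and b = N]) (auto simp: supp_within_def)

lemma Lw_reflect:
  assumes mom: "\<And>k. mom j (- k) = mom j k" and p: "finsupp p"
  shows "Lw mom j (\<lambda>k. p (- k)) s = Lw mom j p (- s)"
proof -
  obtain a b where ab: "supp_within p a b" using p unfolding finsupp_def by blast
  have "supp_within (\<lambda>k. p (- k)) (- b) (- a)"
    using ab by (rule supp_within_reflect)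
  then have "Lw mom j (\<lambda>k. p (- k)) s = (\<Sum>k=- b..- a. p (- k) * mom j (k + s))"
    by (rule Lw_eq_sum)
  also have "\<dots> = (\<Sum>k=a..b. p k * mom j (- k + s))"
    by (rule sum.reindex_bij_witness[of _ uminus uminus]) auto
  also have "\<dots> = (\<Sum>k=a..b. p k * mom j (k + - s))"
    using mom[of "k - s" for k] by (simp add: algebra_simps)
  also have "\<dots> = Lw mom j p (- s)" using Lw_eq_sum[OF ab] by simp
  finally show ?thesis .
qed

lemma Lw_lflip:
  assumes "\<And>k. mom j (- k) = mom j k" "finsupp p"
  shows "Lw mom j (lflip p) s = Lw mom j p (1 - s)"
proof -
  have "lflip p = lshift (\<lambda>k. p (- k)) (- 1)"
    by (simp add: lflip_def lshift_def fun_eq_iff)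
  then show ?thesis using Lw_reflect[of mom j p, OF assms] by (simp add: Lw_lshift)
qed

definition lsym :: "(int \<Rightarrow> complex) \<Rightarrow> int \<Rightarrow> complex" where
  "lsym p = (\<lambda>k. p k + p (- k))"

lemma lsym_uminus: "lsym p (- k) = lsym p k"
  by (simp add: lsym_def)

lemma supp_within_lsym: "supp_within p (- a) a \<Longrightarrow> supp_within (lsym p) (- a) a"
  using supp_within_lincomb[of p "- a" a "\<lambda>k. p (- k)" 1 1] supp_within_reflect[of p "- a" a]
  by (simp add: lsym_def)

section \<open>The linear systems defining Phi\<close>

definition orth ::
  "nat \<Rightarrow> (nat \<Rightarrow> int \<Rightarrow> complex) \<Rightarrow> (nat \<Rightarrow> int) \<Rightarrow> (nat \<Rightarrow> int) \<Rightarrow> (int \<Rightarrow> complex) \<Rightarrow> bool"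
  where "orth r mom n m p \<longleftrightarrow> (\<forall>l<r. \<forall>k. - m l \<le> k \<and> k \<le> n l - 1 \<longrightarrow> Lw mom l p (- k) = 0)"

definition is_Phi ::
  "nat \<Rightarrow> (nat \<Rightarrow> int \<Rightarrow> complex) \<Rightarrow> (nat \<Rightarrow> int) \<Rightarrow> (nat \<Rightarrow> int) \<Rightarrow> (int \<Rightarrow> complex) \<Rightarrow> bool"
  where "is_Phi r mom n m p \<longleftrightarrow>
    supp_within p (- msum r m) (msum r n) \<and> p (msum r n) = 1 \<and> orth r mom n m p"

definition orth_trivial :: "nat \<Rightarrow> (nat \<Rightarrow> int \<Rightarrow> complex) \<Rightarrow> (nat \<Rightarrow> int) \<Rightarrow> (nat \<Rightarrow> int) \<Rightarrow> bool"
  where "orth_trivial r mom n m \<longleftrightarrow>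
    (\<forall>p. supp_within p (- msum r m) (msum r n - 1) \<and> orth r mom n m p \<longrightarrow> p = (\<lambda>_. 0))"

definition in_cone :: "nat \<Rightarrow> (nat \<Rightarrow> int) \<Rightarrow> (nat \<Rightarrow> int) \<Rightarrow> bool"
  where "in_cone r n m \<longleftrightarrow> (\<forall>l<r. 0 \<le> n l + m l)"

lemma orthD: "orth r mom n m p \<Longrightarrow> l < r \<Longrightarrow> - m l \<le> k \<Longrightarrow> k \<le> n l - 1 \<Longrightarrow> Lw mom l p (- k) = 0"
  unfolding orth_def by blast

lemma is_PhiD:
  assumes "is_Phi r mom n m p"
  shows "supp_within p (- msum r m) (msum r n)" "p (msum r n) = 1" "orth r mom n m p" "finsupp p"
  using assms finsupp_supp_within unfolding is_Phi_def by blast+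

lemma orth_trivialD:
  assumes "orth_trivial r mom n m" "supp_within p (- msum r m) (msum r n - 1)" "orth r mom n m p"
  shows "p k = 0"
proof -
  have "p = (\<lambda>_. 0)" using assms unfolding orth_trivial_def by blast
  then show ?thesis by simp
qed

lemma orth_lincomb:
  "orth r mom n m p \<Longrightarrow> orth r mom n m q \<Longrightarrow> finsupp p \<Longrightarrow> finsupp q
   \<Longrightarrow> orth r mom n m (\<lambda>k. c * p k + d * q k)"
  unfolding orth_def by simp

lemma orth_mono:
  assumes p: "orth r mom n m p" and le: "\<And>l. l < r \<Longrightarrow> n' l \<le> n l \<and> m' l \<le> m l"
  shows "orth r mom n' m' p"
  unfolding orth_def
proof (intro allI impI)
  fix l k assume "l < r" "- m' l \<le> k \<and> k \<le> n' l - 1"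
  with le[of l] show "Lw mom l p (- k) = 0" using orthD[OF p] by force
qed

lemma orth_incr_left:
  assumes p: "orth r mom (decr n l) m p" and l: "l < r" and new: "Lw mom l p (1 - n l) = 0"
  shows "orth r mom n m p"
  unfolding orth_def
proof (intro allI impI)
  fix i k assume i: "i < r" and k: "- m i \<le> k \<and> k \<le> n i - 1"
  show "Lw mom i p (- k) = 0"
  proof (cases "i = l \<and> k = n l - 1")
    case False
    then have "k \<le> decr n l i - 1" using k by (auto simp: decr_apply)
    then show ?thesis using orthD[OF p i] k by simp
  qed (use new in simp)
qed

lemma orth_incr_right:
  assumes p: "orth r mom n (decr m l) p" and l: "l < r" and new: "Lw mom l p (m l) = 0"
  shows "orth r mom n m p"
  unfolding orth_def
proof (intro allI impI)
  fix i k assume i: "i < r" and k: "- m i \<le> k \<and> k \<le> n i - 1"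
  show "Lw mom i p (- k) = 0"
  proof (cases "i = l \<and> k = - m l")
    case False
    then have "- decr m l i \<le> k" using k by (auto simp: decr_apply)
    then show ?thesis using orthD[OF p i] k by simp
  qed (use new in simp)
qed

lemma orth_lflip:
  assumes sym: "\<forall>j<r. \<forall>k. mom j (- k) = mom j k" and p: "finsupp p" "orth r mom n m p"
  shows "orth r mom m n (lflip p)"
  unfolding orth_def
proof (intro allI impI)
  fix l k assume l: "l < r" and k: "- n l \<le> k \<and> k \<le> m l - 1"
  have "Lw mom l (lflip p) (- k) = Lw mom l p (- (- k - 1))"
    using Lw_lflip[of mom l p] sym l p(1) by simp
  also have "\<dots> = 0" using orthD[OF p(2) l, of "- k - 1"] k by simp
  finally show "Lw mom l (lflip p) (- k) = 0" .
qed

lemma length_Trows: "in_cone r n m \<Longrightarrow> length (Trows r n m) = nat (msum r n + msum r m)"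
proof -
  assume C: "in_cone r n m"
  have "length (Trows r n m) = (\<Sum>j<r. nat (n j + m j))"
    by (simp add: Trows_def length_concat o_def algebra_simps sum_list_distinct_conv_sum_set
        atLeast0LessThan)
  also have "int \<dots> = (\<Sum>j<r. n j + m j)" using C by (simp add: in_cone_def)
  finally show ?thesis by (simp add: msum_def sum.distrib)
qed

lemma set_Trows: "set (Trows r n m) = {(j, k). j < r \<and> - m j \<le> k \<and> k \<le> n j - 1}"
  unfolding Trows_def by auto

lemma Tmat_mult_vec:
  assumes t: "t < nat (msum r n + msum r m)" and row: "Trows r n m ! t = (l, k)"
    and q: "supp_within q (- msum r m) (msum r n - 1)"
  shows "(Tmat r mom n m *\<^sub>v vec (nat (msum r n + msum r m)) (\<lambda>s. q (- msum r m + int s))) $ t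
         = Lw mom l q (- k)"
proof -
  let ?D = "nat (msum r n + msum r m)"
  have "(Tmat r mom n m *\<^sub>v vec ?D (\<lambda>s. q (- msum r m + int s))) $ t
        = (\<Sum>s\<in>{0..<?D}. mom l ((- msum r m + int s) - k) * q (- msum r m + int s))"
    using t row by (simp add: Tmat_def scalar_prod_def Let_def)
  also have "\<dots> = (\<Sum>i=- msum r m..msum r n - 1. q i * mom l (i + - k))"
    by (rule sum.reindex_bij_witness[of _ "\<lambda>i. nat (i + msum r m)" "\<lambda>s. - msum r m + int s"])
       (auto simp: algebra_simps)
  also have "\<dots> = Lw mom l q (- k)" using Lw_eq_sum[OF q] by simp
  finally show ?thesis .
qed

lemma Trows_nthE:
  assumes "in_cone r n m" "t < nat (msum r n + msum r m)"
  obtains l k where "Trows r n m ! t = (l, k)" "l < r" "- m l \<le> k" "k \<le> n l - 1"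
proof -
  obtain l k where lk: "Trows r n m ! t = (l, k)" by fastforce
  have "(l, k) \<in> set (Trows r n m)" using assms lk length_Trows by (metis nth_mem)
  then show thesis using that lk by (auto simp: set_Trows)
qed

lemma Trows_indexE:
  assumes "in_cone r n m" "l < r" "- m l \<le> k" "k \<le> n l - 1"
  obtains t where "t < nat (msum r n + msum r m)" "Trows r n m ! t = (l, k)"
proof -
  have "(l, k) \<in> set (Trows r n m)" using assms(2-4) by (simp add: set_Trows)
  then show thesis using that length_Trows[OF assms(1)] by (metis in_set_conv_nth)
qed

lemma orth_trivial_if_det:
  assumes C: "in_cone r n m" and det: "det (Tmat r mom n m) \<noteq> 0"
  shows "orth_trivial r mom n m"
  unfolding orth_trivial_def
proof (intro allI impI)
  fix p assume p: "supp_within p (- msum r m) (msum r n - 1) \<and> orth r mom n m p"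
  let ?D = "nat (msum r n + msum r m)"
  let ?v = "vec ?D (\<lambda>s. p (- msum r m + int s))"
  have "Tmat r mom n m *\<^sub>v ?v = 0\<^sub>v ?D"
  proof (rule eq_vecI)
    fix t assume "t < dim_vec (0\<^sub>v ?D :: complex vec)"
    then have t: "t < ?D" by simp
    then obtain l k where "Trows r n m ! t = (l, k)" "l < r" "- m l \<le> k" "k \<le> n l - 1"
      using Trows_nthE[OF C] by blast
    then show "(Tmat r mom n m *\<^sub>v ?v) $ t = 0\<^sub>v ?D $ t"
      using Tmat_mult_vec[OF t] p t orthD by auto
  qed (simp add: Tmat_def)
  moreover have "Tmat r mom n m \<in> carrier_mat ?D ?D" "?v \<in> carrier_vec ?D"
    by (simp_all add: Tmat_def)
  ultimately have v0: "?v = 0\<^sub>v ?D"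
    using det det_0_iff_vec_prod_zero by blast
  show "p = (\<lambda>_. 0)"
  proof
    fix i
    show "p i = 0"
    proof (cases "- msum r m \<le> i \<and> i \<le> msum r n - 1")
      case True
      then have "?v $ nat (i + msum r m) = 0" using v0 by simp
      then show ?thesis using True by simp
    qed (use p in \<open>auto simp: supp_within_def\<close>)
  qed
qed

lemma det_nonzero_solvable:
  fixes A :: "'a :: field mat"
  assumes A: "A \<in> carrier_mat n n" and det: "det A \<noteq> 0" and b: "b \<in> carrier_vec n"
  obtains v where "v \<in> carrier_vec n" "A *\<^sub>v v = b"
proof -
  obtain B where B: "B \<in> carrier_mat n n" "A * B = 1\<^sub>m n"
    using det_non_zero_imp_unit[OF A det, of "()"] unfolding Units_def ring_mat_def by auto
  have "A *\<^sub>v (B *\<^sub>v b) = b"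
    using A B b by (simp add: assoc_mult_mat_vec[symmetric])
  moreover have "B *\<^sub>v b \<in> carrier_vec n" using B b by simp
  ultimately show thesis using that by blast
qed

text \<open>The top coefficient is fixed to 1, so the remaining coefficients solve the system with
  the column of \<open>w\<^bsup>|n|\<^esup>\<close> moved to the right-hand side.\<close>

lemma is_Phi_exists_if_det:
  assumes C: "in_cone r n m" and det: "det (Tmat r mom n m) \<noteq> 0"
  obtains p where "is_Phi r mom n m p"
proof -
  let ?D = "nat (msum r n + msum r m)"
  define b where
    "b = vec ?D (\<lambda>t. - mom (fst (Trows r n m ! t)) (msum r n - snd (Trows r n m ! t)))"
  have "Tmat r mom n m \<in> carrier_mat ?D ?D" "b \<in> carrier_vec ?D" by (simp_all add: Tmat_def b_def)
  then obtain v where v: "v \<in> carrier_vec ?D" "Tmat r mom n m *\<^sub>v v = b"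
    using det_nonzero_solvable det by blast
  define q where
    "q = (\<lambda>i. if - msum r m \<le> i \<and> i \<le> msum r n - 1 then v $ nat (i + msum r m) else 0)"
  define p where "p = (\<lambda>i. q i + (if i = msum r n then 1 else 0))"
  have q: "supp_within q (- msum r m) (msum r n - 1)"
    unfolding supp_within_def q_def by auto
  have vq: "vec ?D (\<lambda>s. q (- msum r m + int s)) = v"
    using v(1) by (auto simp: q_def)
  have "0 \<le> msum r n + msum r m"
    using C unfolding in_cone_def msum_def by (auto simp: sum.distrib[symmetric] intro!: sum_nonneg)
  then have "supp_within p (- msum r m) (msum r n)"
    using q unfolding p_def supp_within_def by fastforce
  moreover have "p (msum r n) = 1"
    by (simp add: p_def q_def)
  moreover have "orth r mom n m p"
    unfolding orth_def
  proof (intro allI impI)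
    fix l k assume "l < r" "- m l \<le> k \<and> k \<le> n l - 1"
    then obtain t where t: "t < ?D" "Trows r n m ! t = (l, k)"
      using Trows_indexE[OF C] by blast
    have "finsupp (\<lambda>i. if i = msum r n then 1 else 0 :: complex)"
      by (rule finsupp_supp_within[of _ "msum r n" "msum r n"]) (simp add: supp_within_def)
    then have "Lw mom l p (- k) = Lw mom l q (- k) + mom l (msum r n - k)"
      using finsupp_supp_within[OF q] by (simp add: p_def Lw_delta)
    also have "Lw mom l q (- k) = - mom l (msum r n - k)"
      using Tmat_mult_vec[OF t q, of mom] vq v(2) t by (simp add: b_def)
    finally show "Lw mom l p (- k) = 0" by simp
  qed
  ultimately show thesis using that unfolding is_Phi_def by blast
qed

lemma is_Phi_unique:
  assumes K: "orth_trivial r mom n m" and p: "is_Phi r mom n m p" and q: "is_Phi r mom n m q"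
  shows "p = q"
proof -
  let ?d = "\<lambda>k. 1 * p k + (- 1) * q k"
  have "supp_within ?d (- msum r m) (msum r n)"
    using is_PhiD(1)[OF p] is_PhiD(1)[OF q] by (rule supp_within_lincomb)
  moreover have "?d (msum r n) = 0" using is_PhiD(2)[OF p] is_PhiD(2)[OF q] by simp
  ultimately have "supp_within ?d (- msum r m) (msum r n - 1)"
    by (rule supp_within_shrink_right)
  moreover have "orth r mom n m ?d"
    using is_PhiD[OF p] is_PhiD[OF q] by (intro orth_lincomb)
  ultimately have "?d k = 0" for k using orth_trivialD[OF K] by blast
  then show ?thesis by (simp add: fun_eq_iff)
qed

lemma Phi_eqI:
  assumes "orth_trivial r mom n m" "is_Phi r mom n m p" "\<exists>j<r. n j \<noteq> - m j"
  shows "Phi r mom n m = p"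
proof -
  have "Phi r mom n m = (THE p. is_Phi r mom n m p)"
    using assms(3) unfolding Phi_def is_Phi_def supp_within_def orth_def Lw_def by auto
  also have "\<dots> = p" using is_Phi_unique[OF assms(1)] assms(2) by blast
  finally show ?thesis .
qed

lemma orth_trivial_swap:
  assumes sym: "\<forall>j<r. \<forall>k. mom j (- k) = mom j k" and K: "orth_trivial r mom n m"
  shows "orth_trivial r mom m n"
  unfolding orth_trivial_def
proof (intro allI impI)
  fix p assume p: "supp_within p (- msum r n) (msum r m - 1) \<and> orth r mom m n p"
  have "supp_within (lflip p) (- msum r m) (msum r n - 1)"
    using supp_within_lflip[of p "- msum r n" "msum r m - 1"] p by simp
  moreover have "orth r mom n m (lflip p)"
    using orth_lflip[OF sym] p finsupp_supp_within by blast
  ultimately have "lflip p k = 0" for k using orth_trivialD[OF K] by blast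
  then show "p = (\<lambda>_. 0)" by (metis lflip_lflip lflip_def)
qed

text \<open>The next orthogonality condition of a Phi never holds for free, otherwise the
  larger system would have a nontrivial solution.\<close>

lemma Lw_is_Phi_decr_nonzero:
  assumes K: "orth_trivial r mom n m" and l: "l < r" and p: "is_Phi r mom (decr n l) m p"
  shows "Lw mom l p (1 - n l) \<noteq> 0"
proof
  assume "Lw mom l p (1 - n l) = 0"
  then have "orth r mom n m p" using orth_incr_left is_PhiD(3)[OF p] l by blast
  moreover have "supp_within p (- msum r m) (msum r n - 1)"
    using is_PhiD(1)[OF p] msum_decr[OF l] by simp
  ultimately have "p (msum r n - 1) = 0" using orth_trivialD[OF K] by blast
  then show False using is_PhiD(2)[OF p] msum_decr[OF l] by simp
qed

lemma normal_nondegenerate: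
  assumes "normal r mom n m" "in_cone r n m" "\<exists>j<r. n j \<noteq> - m j"
  shows "orth_trivial r mom n m" "is_Phi r mom n m (Phi r mom n m)"
proof -
  have det: "det (Tmat r mom n m) \<noteq> 0" using assms(1,3) unfolding normal_def by auto
  then show K: "orth_trivial r mom n m" using orth_trivial_if_det assms(2) by blast
  obtain p where "is_Phi r mom n m p" using is_Phi_exists_if_det assms(2) det by blast
  then show "is_Phi r mom n m (Phi r mom n m)" using Phi_eqI[OF K _ assms(3)] by simp
qed

section \<open>The substitution x = w + 1/w\<close>

definition wpw_mult :: "(int \<Rightarrow> complex) \<Rightarrow> int \<Rightarrow> complex" where
  "wpw_mult q = (\<lambda>k. q (k - 1) + q (k + 1))"

definition subst_wpw :: "complex poly \<Rightarrow> int \<Rightarrow> complex" where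
  "subst_wpw Q = (\<lambda>k. \<Sum>i\<le>degree Q. coeff Q i * lpow wpw i k)"

lemma lmult_wpw [simp]: "lmult wpw q = wpw_mult q"
proof
  fix k
  have "lsupp wpw = {1, -1}" by (auto simp: lsupp_def wpw_def)
  then show "lmult wpw q k = wpw_mult q k" by (simp add: lmult_def wpw_def wpw_mult_def)
qed

lemma supp_within_wpw_mult:
  assumes "supp_within q a b"
  shows "supp_within (wpw_mult q) (a - 1) (b + 1)"
  unfolding supp_within_def wpw_mult_def
proof (intro allI impI)
  fix k assume "q (k - 1) + q (k + 1) \<noteq> 0"
  then consider "q (k - 1) \<noteq> 0" | "q (k + 1) \<noteq> 0" by force
  then show "a - 1 \<le> k \<and> k \<le> b + 1"
    by cases (use assms in \<open>force simp: supp_within_def\<close>)+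
qed

lemma supp_within_wpw_mult_pow:
  "supp_within q a b \<Longrightarrow> supp_within ((wpw_mult ^^ k) q) (a - int k) (b + int k)"
  by (induction k) (auto dest: supp_within_wpw_mult simp: algebra_simps)

lemma finsupp_wpw_mult_pow [simp]: "finsupp q \<Longrightarrow> finsupp ((wpw_mult ^^ k) q)"
  unfolding finsupp_def using supp_within_wpw_mult_pow by blast

lemma supp_within_lpow_wpw: "supp_within (lpow wpw i) (- int i) (int i)"
proof (induction i)
  case 0
  then show ?case by (simp add: supp_within_def lone_def)
next
  case (Suc i)
  then show ?case using supp_within_mono[OF supp_within_wpw_mult[OF Suc]] by simp
qed

lemma lpow_wpw_uminus: "lpow wpw i (- k) = lpow wpw i k"
proof (induction i arbitrary: k)
  case (Suc i)
  have "- k - 1 = - (k + 1)" "- k + 1 = - (k - 1)" by simp_all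
  then have "lpow wpw (Suc i) (- k) = lpow wpw i (- (k + 1)) + lpow wpw i (- (k - 1))"
    by (simp add: wpw_mult_def)
  also have "\<dots> = lpow wpw i (k + 1) + lpow wpw i (k - 1)"
    by (simp only: Suc.IH)
  finally show ?case by (simp add: wpw_mult_def)
qed (simp add: lone_def)

lemma lpow_wpw_top: "lpow wpw i (int i) = 1"
proof (induction i)
  case (Suc i)
  have "lpow wpw i (int i + 2) = 0"
    using supp_within_outside[OF supp_within_lpow_wpw] by simp
  then show ?case using Suc by (simp add: wpw_mult_def add.commute)
qed (simp add: lone_def)

lemma lpow_wpw_parity: "odd (t + int i) \<Longrightarrow> lpow wpw i t = 0"
proof (induction i arbitrary: t)
  case (Suc i)
  then have "lpow wpw i (t - 1) = 0" "lpow wpw i (t + 1) = 0" by auto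
  then show ?case by (simp add: wpw_mult_def)
qed (auto simp: lone_def)

lemma subst_wpw_eq_sum:
  "degree Q \<le> D \<Longrightarrow> subst_wpw Q = (\<lambda>k. \<Sum>i\<le>D. coeff Q i * lpow wpw i k)"
  unfolding subst_wpw_def fun_eq_iff
  by (auto intro!: sum.mono_neutral_left intro: le_degree)

lemma supp_within_subst_wpw:
  assumes "degree Q \<le> D"
  shows "supp_within (subst_wpw Q) (- int D) (int D)"
  unfolding supp_within_def subst_wpw_eq_sum[OF assms]
proof (intro allI impI)
  fix k assume "(\<Sum>i\<le>D. coeff Q i * lpow wpw i k) \<noteq> 0"
  then obtain i where "i \<le> D" "lpow wpw i k \<noteq> 0"
    by (metis (no_types, lifting) atMost_iff mult_zero_right sum.neutral)
  then show "- int D \<le> k \<and> k \<le> int D"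
    using supp_within_lpow_wpw[of i] unfolding supp_within_def by force
qed

lemma finsupp_subst_wpw [simp]: "finsupp (subst_wpw Q)"
  using supp_within_subst_wpw[of Q "degree Q"] finsupp_supp_within by blast

lemma subst_wpw_uminus: "subst_wpw Q (- k) = subst_wpw Q k"
  by (simp add: subst_wpw_def lpow_wpw_uminus)

lemma subst_wpw_lincomb:
  "subst_wpw (smult c Q + smult d R) = (\<lambda>k. c * subst_wpw Q k + d * subst_wpw R k)"
proof -
  let ?D = "max (degree Q) (degree R)"
  have "degree (smult c Q + smult d R) \<le> ?D"
    by (meson degree_add_le degree_smult_le max.cobounded1 max.cobounded2 order_trans)
  then show ?thesis
    by (simp add: subst_wpw_eq_sum[of _ ?D] sum_distrib_left sum.distrib algebra_simps)
qed

lemma subst_wpw_smult: "subst_wpw (smult c Q) = (\<lambda>k. c * subst_wpw Q k)"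
  using subst_wpw_lincomb[of c Q 0 Q] by simp

lemma subst_wpw_0 [simp]: "subst_wpw 0 = (\<lambda>k. 0)"
  by (simp add: subst_wpw_def fun_eq_iff)

lemma subst_wpw_monom: "subst_wpw (monom c N) = (\<lambda>k. c * lpow wpw N k)"
  by (simp add: subst_wpw_eq_sum[of _ N] degree_monom_le coeff_monom if_distrib[of "\<lambda>x. x * _"]
      cong: if_cong)

lemma subst_wpw_pCons_0: "subst_wpw (pCons 0 Q) = wpw_mult (subst_wpw Q)"
proof -
  have "subst_wpw (pCons 0 Q)
        = (\<lambda>k. \<Sum>i\<le>Suc (degree Q). coeff (pCons 0 Q) i * lpow wpw i k)"
    by (rule subst_wpw_eq_sum) (simp add: degree_pCons_le)
  also have "\<dots> = (\<lambda>k. \<Sum>i\<le>degree Q. coeff Q i * lpow wpw (Suc i) k)"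
    by (subst sum.atMost_Suc_shift) (simp del: lpow.simps)
  also have "\<dots> = wpw_mult (subst_wpw Q)"
    by (simp add: subst_wpw_def wpw_mult_def fun_eq_iff sum.distrib algebra_simps)
  finally show ?thesis .
qed

lemma subst_wpw_mult_monom: "subst_wpw (Q * monom 1 k) = (wpw_mult ^^ k) (subst_wpw Q)"
proof (induction k)
  case (Suc k)
  have "Q * monom 1 (Suc k) = pCons 0 (Q * monom 1 k)"
    by (simp add: monom_Suc mult_pCons_right)
  then show ?case using Suc subst_wpw_pCons_0 by simp
qed simp

lemma subst_wpw_coeff:
  assumes "degree Q \<le> Suc M"
  shows "subst_wpw Q (int M) = coeff Q M"
proof -
  have "coeff Q i * lpow wpw i (int M) = (if i = M then coeff Q M else 0)" if i: "i \<le> Suc M" for i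
  proof -
    consider "i < M" | "i = M" | "i = Suc M" using i by linarith
    then show ?thesis
    proof cases
      case 1
      then show ?thesis using supp_within_outside[OF supp_within_lpow_wpw, of "int M" i] by simp
    next
      case 2
      then show ?thesis using lpow_wpw_top by simp
    next
      case 3
      then show ?thesis using lpow_wpw_parity[of "int M" i] by simp
    qed
  qed
  then have "subst_wpw Q (int M) = (\<Sum>i\<le>Suc M. if i = M then coeff Q M else 0)"
    unfolding subst_wpw_eq_sum[OF assms] by (intro sum.cong) simp_all
  then show ?thesis by simp
qed

lemma supp_within_sub_lpow_wpw:
  assumes sym: "\<forall>k. p (- k) = p k" and p: "supp_within p (- int (Suc N)) (int (Suc N))"
  shows "supp_within (\<lambda>k. p k - p (int (Suc N)) * lpow wpw (Suc N) k) (- int N) (int N)"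
  unfolding supp_within_def
proof (intro allI impI)
  fix k assume k: "p k - p (int (Suc N)) * lpow wpw (Suc N) k \<noteq> 0"
  then have "p k \<noteq> 0 \<or> lpow wpw (Suc N) k \<noteq> 0" by auto
  then have range: "- int (Suc N) \<le> k \<and> k \<le> int (Suc N)"
    using p supp_within_lpow_wpw[of "Suc N"] unfolding supp_within_def by blast
  have "lpow wpw (Suc N) (- int (Suc N)) = 1"
    by (metis lpow_wpw_top lpow_wpw_uminus)
  moreover have "p (- int (Suc N)) = p (int (Suc N))" using sym by blast
  ultimately have "k \<noteq> int (Suc N)" "k \<noteq> - int (Suc N)"
    using k lpow_wpw_top[of "Suc N"] by (auto simp del: lpow.simps)
  with range show "- int N \<le> k \<and> k \<le> int N" by auto
qed

lemma symmetric_eq_subst_wpw: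
  "(\<forall>k. p (- k) = p k) \<Longrightarrow> supp_within p (- int N) (int N)
   \<Longrightarrow> \<exists>Q. degree Q \<le> N \<and> coeff Q N = p (int N) \<and> subst_wpw Q = p"
proof (induction N arbitrary: p)
  case 0
  then have "p = (\<lambda>k. p 0 * lpow wpw 0 k)"
    by (auto simp: supp_within_def lone_def fun_eq_iff)
  then have "subst_wpw [:p 0:] = p"
    using subst_wpw_monom[of "p 0" 0] by (simp add: monom_0)
  then show ?case by (intro exI[of _ "[:p 0:]"]) simp
next
  case (Suc N)
  let ?c = "p (int (Suc N))"
  define p' where "p' = (\<lambda>k. p k - ?c * lpow wpw (Suc N) k)"
  have "\<forall>k. p' (- k) = p' k"
    using Suc.prems(1) lpow_wpw_uminus[of "Suc N"] by (simp add: p'_def del: lpow.simps)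
  moreover have "supp_within p' (- int N) (int N)"
    unfolding p'_def using Suc.prems by (rule supp_within_sub_lpow_wpw)
  ultimately obtain Q' where Q': "degree Q' \<le> N" "subst_wpw Q' = p'"
    using Suc.IH by blast
  let ?Q = "Q' + monom ?c (Suc N)"
  have "degree ?Q \<le> Suc N"
    using Q'(1) by (meson degree_add_le degree_monom_le le_SucI)
  moreover have "coeff ?Q (Suc N) = ?c" using Q'(1) by (simp add: coeff_eq_0)
  moreover have "subst_wpw ?Q = p"
    using subst_wpw_lincomb[of 1 Q' 1 "monom ?c (Suc N)"] subst_wpw_monom[of ?c "Suc N"] Q'(2)
    by (simp add: p'_def)
  ultimately show ?case by blast
qed

section \<open>The functionals M_j\<close>

lemma Mfun_eq_Lw: "Mfun mom j Q = Lw mom j (subst_wpw Q) 0"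
proof -
  have "finsupp (lpow wpw i)" for i using supp_within_lpow_wpw finsupp_supp_within by blast
  then have "Lw mom j (subst_wpw Q) 0 = (\<Sum>i\<le>degree Q. coeff Q i * Lw mom j (lpow wpw i) 0)"
    by (simp add: subst_wpw_def)
  then show ?thesis by (simp add: Mfun_def Lw_def lshift_def)
qed

lemma Mfun_add: "Mfun mom j (A + B) = Mfun mom j A + Mfun mom j B"
  using subst_wpw_lincomb[of 1 A 1 B] by (simp add: Mfun_eq_Lw)

lemma Mfun_smult: "Mfun mom j (smult c A) = c * Mfun mom j A"
  by (simp add: Mfun_eq_Lw subst_wpw_smult)

lemma Mfun_0 [simp]: "Mfun mom j 0 = 0"
  by (simp add: Mfun_eq_Lw)

lemma Mfun_sum: "finite I \<Longrightarrow> Mfun mom j (\<Sum>i\<in>I. f i) = (\<Sum>i\<in>I. Mfun mom j (f i))"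
  by (induction I rule: finite_induct) (auto simp: Mfun_add)

lemma Mfun_mult_monom: "Mfun mom j (Q * monom 1 k) = Lw mom j ((wpw_mult ^^ k) (subst_wpw Q)) 0"
  by (simp add: Mfun_eq_Lw subst_wpw_mult_monom)

lemma Lw_wpw_mult: "finsupp q \<Longrightarrow> Lw mom j (wpw_mult q) t = Lw mom j q (t + 1) + Lw mom j q (t - 1)"
proof -
  assume q: "finsupp q"
  have "wpw_mult q = (\<lambda>k. lshift q 1 k + lshift q (- 1) k)"
    by (simp add: wpw_mult_def lshift_def fun_eq_iff)
  then show ?thesis using q by (simp add: Lw_lshift algebra_simps)
qed

text \<open>Used for \<open>g k t = L\<^sub>j[(w + 1/w)\<^sup>k Q(w + 1/w) w\<^sup>t]\<close>, which is \<open>M\<^sub>j[Q x\<^sup>k]\<close> at \<open>t = 0\<close>.\<close>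

locale pascal =
  fixes g :: "nat \<Rightarrow> int \<Rightarrow> complex"
  assumes step: "g (Suc k) t = g k (t + 1) + g k (t - 1)"
begin

lemma symmetric:
  assumes sym0: "\<And>t. g 0 (- t) = g 0 t"
  shows "g k (- t) = g k t"
proof (induction k arbitrary: t)
  case (Suc k)
  have "- t + 1 = - (t - 1)" "- t - 1 = - (t + 1)" by simp_all
  then have "g (Suc k) (- t) = g k (- (t - 1)) + g k (- (t + 1))"
    using step[of k "- t"] by simp
  also have "\<dots> = g k (t - 1) + g k (t + 1)"
    by (simp only: Suc.IH)
  finally show ?case by (simp add: step)
qed (rule sym0)

lemma vanish:
  assumes "\<And>t. \<bar>t\<bar> < int K \<Longrightarrow> g 0 t = 0"
  shows "\<bar>t\<bar> + int k < int K \<Longrightarrow> g k t = 0"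
proof (induction k arbitrary: t)
  case (Suc k)
  then show ?case by (simp add: step)
qed (use assms in simp)

lemma edge:
  assumes "\<And>t. \<bar>t\<bar> < int K \<Longrightarrow> g 0 t = 0"
  shows "1 \<le> t \<Longrightarrow> t + int k = int K \<Longrightarrow> g k t = g 0 (int K)"
proof (induction k arbitrary: t)
  case (Suc k)
  have "g k (t - 1) = 0" by (rule vanish[OF assms]) (use Suc.prems in auto)
  moreover have "g k (t + 1) = g 0 (int K)" by (rule Suc.IH) (use Suc.prems in auto)
  ultimately show ?case by (simp add: step)
qed simp

lemma top:
  assumes "\<And>t. g 0 (- t) = g 0 t" "\<And>t. \<bar>t\<bar> < int K \<Longrightarrow> g 0 t = 0" "1 \<le> K"
  shows "g K 0 = 2 * g 0 (int K)"
proof -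
  obtain K' where K': "K = Suc K'" using assms(3) by (cases K) auto
  have "g K' 1 = g 0 (int K)" by (rule edge[OF assms(2)]) (use K' in auto)
  moreover have "g K' (- 1) = g K' 1" using symmetric[OF assms(1)] by blast
  ultimately show ?thesis using K' by (simp add: step)
qed

end

lemma pascal_Lw_wpw_mult_pow: "pascal (\<lambda>k t. Lw mom j ((wpw_mult ^^ k) (subst_wpw Q)) t)"
  by unfold_locales (simp add: Lw_wpw_mult)

lemma Mfun_mult_monom_eq_0:
  assumes "\<And>t. \<bar>t\<bar> < int K \<Longrightarrow> Lw mom j (subst_wpw Q) t = 0" "k < K"
  shows "Mfun mom j (Q * monom 1 k) = 0"
  unfolding Mfun_mult_monom
  by (rule pascal.vanish[OF pascal_Lw_wpw_mult_pow]) (use assms in auto)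

lemma Mfun_mult_monom_edge:
  assumes mom: "\<And>k. mom j (- k) = mom j k"
    and "\<And>t. \<bar>t\<bar> < int K \<Longrightarrow> Lw mom j (subst_wpw Q) t = 0" "1 \<le> K"
  shows "Mfun mom j (Q * monom 1 K) = 2 * Lw mom j (subst_wpw Q) (int K)"
proof -
  have "Lw mom j (subst_wpw Q) (- t) = Lw mom j (subst_wpw Q) t" for t
    using Lw_reflect[of mom j "subst_wpw Q" "- t", OF mom] by (simp add: subst_wpw_uminus)
  then show ?thesis
    unfolding Mfun_mult_monom
    by (subst pascal.top[OF pascal_Lw_wpw_mult_pow]) (use assms in auto)
qed

section \<open>Symmetric moments with normal diagonal indices\<close>

text \<open>In the names below, \<open>diag\<close>, \<open>incr_fst\<close>, \<open>decr_fst\<close> and \<open>decr_snd\<close> refer to the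
  index pairs \<open>(n; n)\<close>, \<open>(n + e\<^sub>j; n)\<close>, \<open>(n - e\<^sub>j; n)\<close> and \<open>(n; n - e\<^sub>j)\<close>.\<close>

locale symmetric_normal =
  fixes r :: nat and mom :: "nat \<Rightarrow> int \<Rightarrow> complex"
  assumes mom_sym: "\<forall>j<r. \<forall>k. mom j (- k) = mom j k"
    and normal_diag: "nonneg r n \<Longrightarrow> normal r mom n n"
    and normal_incr_fst: "nonneg r n \<Longrightarrow> j < r \<Longrightarrow> normal r mom (incr n j) n"
begin

lemma Lw_reflect_mom: "j < r \<Longrightarrow> finsupp p \<Longrightarrow> Lw mom j (\<lambda>k. p (- k)) s = Lw mom j p (- s)"
  using Lw_reflect[of mom j p] mom_sym by simp

lemma Lw_lflip_mom: "j < r \<Longrightarrow> finsupp p \<Longrightarrow> Lw mom j (lflip p) s = Lw mom j p (1 - s)"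
  using Lw_lflip[of mom j p] mom_sym by simp

lemma orth_trivial_diag: "nonneg r n \<Longrightarrow> orth_trivial r mom n n"
proof (cases "\<forall>j<r. n j = 0")
  case True
  assume "nonneg r n"
  then have "msum r n = 0" using True msum_eq_0_iff_nonneg by blast
  then show ?thesis by (fastforce simp: orth_trivial_def supp_within_def fun_eq_iff)
next
  case False
  assume n: "nonneg r n"
  show ?thesis
    by (rule normal_nondegenerate(1)[OF normal_diag[OF n]])
       (use n False in \<open>auto simp: in_cone_def nonneg_def\<close>)
qed

lemma is_Phi_diag: "nonneg r n \<Longrightarrow> is_Phi r mom n n (Phi r mom n n)"
proof (cases "\<forall>j<r. n j = 0")
  case True
  assume "nonneg r n"
  then have "msum r n = 0" using True msum_eq_0_iff_nonneg by blast
  moreover have "Phi r mom n n = lone" using True by (simp add: Phi_def)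
  ultimately show ?thesis using True by (auto simp: is_Phi_def orth_def supp_within_def lone_def)
next
  case False
  assume n: "nonneg r n"
  show ?thesis
    by (rule normal_nondegenerate(2)[OF normal_diag[OF n]])
       (use n False in \<open>auto simp: in_cone_def nonneg_def\<close>)
qed

lemma incr_fst_nondegenerate:
  "nonneg r n \<Longrightarrow> j < r \<Longrightarrow> in_cone r (incr n j) n \<and> (\<exists>i<r. incr n j i \<noteq> - n i)"
  by (auto simp: in_cone_def nonneg_def incr_apply intro!: exI[of _ j])

lemma orth_trivial_incr_fst: "nonneg r n \<Longrightarrow> j < r \<Longrightarrow> orth_trivial r mom (incr n j) n"
  using normal_nondegenerate(1)[OF normal_incr_fst] incr_fst_nondegenerate by blast

lemma is_Phi_incr_fst: "nonneg r n \<Longrightarrow> j < r \<Longrightarrow> is_Phi r mom (incr n j) n (Phi r mom (incr n j) n)"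
  using normal_nondegenerate(2)[OF normal_incr_fst] incr_fst_nondegenerate by blast

lemma orth_trivial_decr_snd:
  "nonneg r n \<Longrightarrow> j < r \<Longrightarrow> 1 \<le> n j \<Longrightarrow> orth_trivial r mom n (decr n j)"
  using orth_trivial_incr_fst[OF nonneg_decr] by fastforce

lemma orth_trivial_decr_fst:
  "nonneg r n \<Longrightarrow> j < r \<Longrightarrow> 1 \<le> n j \<Longrightarrow> orth_trivial r mom (decr n j) n"
  using orth_trivial_swap[OF mom_sym orth_trivial_decr_snd] by blast

lemma Lw_Phi_diag_nonzero: "nonneg r n \<Longrightarrow> j < r \<Longrightarrow> Lw mom j (Phi r mom n n) (- n j) \<noteq> 0"
  using Lw_is_Phi_decr_nonzero[OF orth_trivial_incr_fst, of n j j "Phi r mom n n"] is_Phi_diag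
  by (simp add: incr_apply)

text \<open>\<open>\<Phi>\<^bsub>n-e\<^sub>l;n-e\<^sub>l\<^esub>\<close> and its flip both satisfy the conditions of \<open>(n - e\<^sub>l; n - e\<^sub>l)\<close>;
  the combination below also meets the one extra condition of \<open>(n - e\<^sub>l; n)\<close>.\<close>

lemma is_Phi_decr_fst_combination:
  assumes n: "nonneg r n" and l: "l < r" and nl: "1 \<le> n l"
  defines "A \<equiv> Phi r mom (decr n l) (decr n l)"
  defines "\<beta> \<equiv> - Lw mom l A (n l) / Lw mom l A (1 - n l)"
  shows "is_Phi r mom (decr n l) n (\<lambda>k. A k + \<beta> * lflip A k)"
proof -
  let ?m = "decr n l"
  have m: "nonneg r ?m" by (rule nonneg_decr[OF n nl])
  have A: "is_Phi r mom ?m ?m A" unfolding A_def by (rule is_Phi_diag[OF m])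
  have sm: "msum r ?m = msum r n - 1" by (rule msum_decr[OF l])
  have fA: "finsupp A" by (rule is_PhiD(4)[OF A])
  have Z: "Lw mom l A (1 - n l) \<noteq> 0"
    using Lw_Phi_diag_nonzero[OF m l] by (simp add: A_def decr_apply)
  have "supp_within (\<lambda>k. 1 * A k + \<beta> * lflip A k) (- msum r n) (msum r ?m)"
    using supp_within_mono[OF is_PhiD(1)[OF A]]
      supp_within_mono[OF supp_within_lflip[OF is_PhiD(1)[OF A]]] sm
    by (intro supp_within_lincomb) auto
  moreover have "A (msum r ?m) + \<beta> * lflip A (msum r ?m) = 1"
    using is_PhiD(2)[OF A] supp_within_outside[OF is_PhiD(1)[OF A], of "- msum r ?m - 1"]
    by (simp add: lflip_def)
  moreover have "orth r mom ?m n (\<lambda>k. 1 * A k + \<beta> * lflip A k)"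
  proof (rule orth_incr_right[OF _ l])
    show "orth r mom ?m (decr n l) (\<lambda>k. 1 * A k + \<beta> * lflip A k)"
      using is_PhiD(3)[OF A] orth_lflip[OF mom_sym fA] fA by (intro orth_lincomb) auto
    have "Lw mom l (\<lambda>k. 1 * A k + \<beta> * lflip A k) (n l)
          = Lw mom l A (n l) + \<beta> * Lw mom l A (1 - n l)"
      using fA by (simp add: Lw_lflip_mom[OF l])
    also have "\<dots> = 0" using Z by (simp add: \<beta>_def)
    finally show "Lw mom l (\<lambda>k. 1 * A k + \<beta> * lflip A k) (n l) = 0" .
  qed
  ultimately show ?thesis by (simp add: is_Phi_def)
qed

lemma Phi_decr_fst_eq:
  assumes n: "nonneg r n" and l: "l < r" and nl: "1 \<le> n l"
  defines "A \<equiv> Phi r mom (decr n l) (decr n l)"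
  defines "\<beta> \<equiv> - Lw mom l A (n l) / Lw mom l A (1 - n l)"
  shows "Phi r mom (decr n l) n = (\<lambda>k. A k + \<beta> * lflip A k)"
proof -
  have "\<exists>i<r. decr n l i \<noteq> - n i" using l nl by (auto simp: decr_apply intro!: exI[of _ l])
  then show ?thesis
    using Phi_eqI[OF orth_trivial_decr_fst[OF n l nl] is_Phi_decr_fst_combination[OF n l nl]]
    by (simp add: A_def \<beta>_def)
qed

lemma is_Phi_decr_fst:
  "nonneg r n \<Longrightarrow> l < r \<Longrightarrow> 1 \<le> n l \<Longrightarrow> is_Phi r mom (decr n l) n (Phi r mom (decr n l) n)"
  using is_Phi_decr_fst_combination Phi_decr_fst_eq by simp

lemma alpha_decr_fst:
  assumes n: "nonneg r n" and l: "l < r" and nl: "1 \<le> n l"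
  defines "A \<equiv> Phi r mom (decr n l) (decr n l)"
  shows "alpha r mom (decr n l) n = - Lw mom l A (n l) / Lw mom l A (1 - n l)"
proof -
  have A: "is_Phi r mom (decr n l) (decr n l) A"
    unfolding A_def by (rule is_Phi_diag[OF nonneg_decr[OF n nl]])
  have "A (- msum r n) = 0" "A (msum r n - 1) = 1"
    using is_PhiD(2)[OF A] msum_decr[OF l] supp_within_outside[OF is_PhiD(1)[OF A], of "- msum r n"]
    by simp_all
  then show ?thesis
    using Phi_decr_fst_eq[OF n l nl] by (simp add: alpha_def lflip_def A_def)
qed

lemma Lw_Phi_decr_fst:
  assumes n: "nonneg r n" and l: "l < r" and nl: "1 \<le> n l"
  shows "Lw mom l (Phi r mom (decr n l) n) (1 - n l)
    = (1 - (alpha r mom (decr n l) n)\<^sup>2) * Lw mom l (Phi r mom (decr n l) (decr n l)) (1 - n l)"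
proof -
  define A where "A = Phi r mom (decr n l) (decr n l)"
  define \<alpha> where "\<alpha> = alpha r mom (decr n l) n"
  have fA: "finsupp A"
    unfolding A_def by (rule is_PhiD(4)[OF is_Phi_diag[OF nonneg_decr[OF n nl]]])
  have Z: "Lw mom l A (1 - n l) \<noteq> 0"
    using Lw_Phi_diag_nonzero[OF nonneg_decr[OF n nl] l] by (simp add: A_def decr_apply)
  have "Phi r mom (decr n l) n = (\<lambda>k. A k + \<alpha> * lflip A k)"
    using Phi_decr_fst_eq[OF n l nl] alpha_decr_fst[OF n l nl] by (simp add: A_def \<alpha>_def)
  then have "Lw mom l (Phi r mom (decr n l) n) (1 - n l)
      = Lw mom l A (1 - n l) + \<alpha> * Lw mom l A (n l)"
    using fA by (simp add: Lw_lflip_mom[OF l])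
  also have "Lw mom l A (n l) = - \<alpha> * Lw mom l A (1 - n l)"
    using alpha_decr_fst[OF n l nl] Z by (simp add: A_def \<alpha>_def)
  finally show ?thesis by (simp add: A_def \<alpha>_def power2_eq_square algebra_simps)
qed

lemma Lw_Phi_decr_fst_nonzero:
  assumes "nonneg r n" "l < r" "1 \<le> n l"
  shows "Lw mom l (Phi r mom (decr n l) n) (1 - n l) \<noteq> 0"
  using Lw_is_Phi_decr_nonzero[OF orth_trivial_diag[OF assms(1)] assms(2)
      is_Phi_decr_fst[OF assms]] .

lemma is_Phi_decr_snd_combination:
  assumes n: "nonneg r n" and j: "j < r" and nj: "1 \<le> n j"
  defines "G \<equiv> Phi r mom (decr n j) n"
  shows "is_Phi r mom n (decr n j) (\<lambda>k. Phi r mom n n k - alpha r mom n n * lflip G k)"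
proof -
  let ?P = "Phi r mom n n" and ?a = "alpha r mom n n"
  let ?W = "\<lambda>k. 1 * ?P k + (- ?a) * lflip G k"
  have P: "is_Phi r mom n n ?P" by (rule is_Phi_diag[OF n])
  have G: "is_Phi r mom (decr n j) n G" unfolding G_def by (rule is_Phi_decr_fst[OF n j nj])
  have sm: "msum r (decr n j) = msum r n - 1" by (rule msum_decr[OF j])
  have sG: "supp_within (lflip G) (- msum r n) (msum r n - 1)"
    using supp_within_lflip[OF is_PhiD(1)[OF G]] sm by simp
  have "supp_within ?W (- msum r n) (msum r n)"
    using is_PhiD(1)[OF P] supp_within_mono[OF sG] by (intro supp_within_lincomb) auto
  moreover have "?W (- msum r n) = 0"
    using is_PhiD(2)[OF G] sm by (simp add: lflip_def alpha_def)
  ultimately have "supp_within ?W (- msum r (decr n j)) (msum r n)"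
    using supp_within_shrink_left sm by fastforce
  moreover have "?W (msum r n) = 1"
    using is_PhiD(2)[OF P] supp_within_outside[OF sG, of "msum r n"] by simp
  moreover have "orth r mom n (decr n j) ?W"
    using orth_mono[OF is_PhiD(3)[OF P], of n "decr n j"] orth_lflip[OF mom_sym _ is_PhiD(3)[OF G]]
      is_PhiD(4)[OF P] is_PhiD(4)[OF G]
    by (intro orth_lincomb) (auto simp: decr_apply)
  ultimately show ?thesis by (simp add: is_Phi_def)
qed

lemma Phi_decr_snd_eq:
  assumes n: "nonneg r n" and j: "j < r" and nj: "1 \<le> n j"
  shows "Phi r mom n (decr n j)
    = (\<lambda>k. Phi r mom n n k - alpha r mom n n * lflip (Phi r mom (decr n j) n) k)"
proof -
  have "\<exists>i<r. n i \<noteq> - decr n j i" using j nj by (auto simp: decr_apply intro!: exI[of _ j])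
  then show ?thesis
    using Phi_eqI[OF orth_trivial_decr_snd[OF n j nj] is_Phi_decr_snd_combination[OF n j nj]]
    by simp
qed

lemma is_Phi_decr_snd:
  "nonneg r n \<Longrightarrow> j < r \<Longrightarrow> 1 \<le> n j \<Longrightarrow> is_Phi r mom n (decr n j) (Phi r mom n (decr n j))"
  using is_Phi_decr_snd_combination Phi_decr_snd_eq by simp

section \<open>Perfectness and the polynomials P_n\<close>

lemma Lw_lsym: "j < r \<Longrightarrow> finsupp p \<Longrightarrow> Lw mom j (lsym p) t = Lw mom j p t + Lw mom j p (- t)"
  unfolding lsym_def by (simp add: Lw_reflect_mom)

definition M_orth :: "(nat \<Rightarrow> int) \<Rightarrow> complex poly \<Rightarrow> bool" where
  "M_orth n P \<longleftrightarrow> (\<forall>j<r. \<forall>k::nat. int k < n j \<longrightarrow> Mfun mom j (P * monom 1 k) = 0)"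

definition perfect :: "(nat \<Rightarrow> int) \<Rightarrow> bool" where
  "perfect n \<longleftrightarrow> (\<forall>D. degree D < nat (msum r n) \<and> M_orth n D \<longrightarrow> D = 0)"

lemma perfectD:
  assumes "perfect n" "M_orth n D" "degree D \<le> nat (msum r n)" "coeff D (nat (msum r n)) = 0"
  shows "D = 0"
  using assms eq_zero_or_degree_less[OF assms(3,4)] unfolding perfect_def by blast

lemma M_orth_lincomb: "M_orth n A \<Longrightarrow> M_orth n B \<Longrightarrow> M_orth n (smult c A + smult d B)"
  unfolding M_orth_def by (simp add: distrib_right Mfun_add Mfun_smult)

lemma M_orth_smult: "M_orth n A \<Longrightarrow> M_orth n (smult c A)"
  using M_orth_lincomb[of n A A c 0] by simp

lemma M_orth_diff: "M_orth n A \<Longrightarrow> M_orth n B \<Longrightarrow> M_orth n (A - B)"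
  using M_orth_lincomb[of n A B 1 "- 1"] by simp

lemma M_orth_if_Lw:
  assumes "nonneg r n" and "\<And>j t. j < r \<Longrightarrow> \<bar>t\<bar> < n j \<Longrightarrow> Lw mom j (subst_wpw Q) t = 0"
  shows "M_orth n Q"
  unfolding M_orth_def
proof (intro allI impI)
  fix j k assume j: "j < r" and k: "int k < n j"
  show "Mfun mom j (Q * monom 1 k) = 0"
    by (rule Mfun_mult_monom_eq_0[where K = "nat (n j)"]) (use assms j k in auto)
qed

text \<open>The symmetrization of a Phi whose conditions include \<open>(n; n - 1)\<close> is a polynomial in
  \<open>w + 1/w\<close> satisfying the conditions of \<open>P\<^sub>n\<close>.\<close>

lemma lsym_Phi_eq_subst_wpw:
  assumes n: "nonneg r n" and p: "is_Phi r mom n m p"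
    and m: "\<And>i. i < r \<Longrightarrow> n i - 1 \<le> m i" "msum r m \<le> msum r n"
  defines "N \<equiv> nat (msum r n)"
  obtains Q where "degree Q \<le> N" "coeff Q N = 1 + p (- msum r n)" "subst_wpw Q = lsym p"
    "M_orth n Q"
proof -
  have N: "int N = msum r n" using msum_nonneg[OF n] by (simp add: N_def)
  have "supp_within p (- int N) (int N)"
    using supp_within_mono[OF is_PhiD(1)[OF p]] m(2) N by simp
  then have "supp_within (lsym p) (- int N) (int N)" by (rule supp_within_lsym)
  moreover have "\<forall>k. lsym p (- k) = lsym p k" by (simp add: lsym_uminus)
  ultimately obtain Q where Q: "degree Q \<le> N" "coeff Q N = lsym p (int N)" "subst_wpw Q = lsym p"
    using symmetric_eq_subst_wpw by blast
  have "Lw mom j (lsym p) t = 0" if j: "j < r" and t: "\<bar>t\<bar> < n j" for j t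
    using orthD[OF is_PhiD(3)[OF p] j, of t] orthD[OF is_PhiD(3)[OF p] j, of "- t"] m(1)[OF j] t
    by (simp add: Lw_lsym[OF j is_PhiD(4)[OF p]])
  then have "M_orth n Q" using M_orth_if_Lw[OF n] Q(3) by simp
  moreover have "lsym p (int N) = 1 + p (- msum r n)"
    using is_PhiD(2)[OF p] N by (simp add: lsym_def)
  ultimately show thesis using that Q by simp
qed

lemma Mfun_lsym_Phi_diag:
  assumes n: "nonneg r n" and j: "j < r" and Q: "subst_wpw Q = lsym (Phi r mom n n)"
  shows "Mfun mom j (Q * monom 1 (nat (n j))) = 2 * Lw mom j (Phi r mom n n) (- n j)"
proof -
  let ?P = "Phi r mom n n"
  have P: "is_Phi r mom n n ?P" by (rule is_Phi_diag[OF n])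
  have LwQ: "Lw mom j (subst_wpw Q) t = Lw mom j ?P t + Lw mom j ?P (- t)" for t
    using Lw_lsym[OF j is_PhiD(4)[OF P]] Q by simp
  show ?thesis
  proof (cases "n j = 0")
    case True
    then show ?thesis using LwQ[of 0] by (simp add: Mfun_eq_Lw)
  next
    case False
    then have nj: "1 \<le> n j" using n j unfolding nonneg_def by force
    have "Lw mom j (subst_wpw Q) t = 0" if t: "\<bar>t\<bar> < int (nat (n j))" for t
    proof -
      have "Lw mom j ?P t = 0" "Lw mom j ?P (- t) = 0"
        using orthD[OF is_PhiD(3)[OF P] j, of "- t"] orthD[OF is_PhiD(3)[OF P] j, of t] t nj
        by simp_all
      then show ?thesis using LwQ[of t] by simp
    qed
    then have "Mfun mom j (Q * monom 1 (nat (n j))) = 2 * Lw mom j (subst_wpw Q) (n j)"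
      using Mfun_mult_monom_edge[of mom j "nat (n j)"] mom_sym j nj by simp
    moreover have "Lw mom j ?P (n j) = 0"
      using orthD[OF is_PhiD(3)[OF P] j, of "- n j"] nj by simp
    ultimately show ?thesis using LwQ[of "n j"] by simp
  qed
qed

lemma one_plus_alpha_nonzero_if_perfect:
  assumes n: "nonneg r n" and pf: "perfect n"
  shows "1 + alpha r mom n n \<noteq> 0"
proof
  assume a: "1 + alpha r mom n n = 0"
  let ?P = "Phi r mom n n"
  have P: "is_Phi r mom n n ?P" by (rule is_Phi_diag[OF n])
  obtain Q where Q: "degree Q \<le> nat (msum r n)" "coeff Q (nat (msum r n)) = 1 + alpha r mom n n"
      "subst_wpw Q = lsym ?P" "M_orth n Q"
    using lsym_Phi_eq_subst_wpw[OF n P] by (auto simp: alpha_def)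
  have "Q = 0" using perfectD[OF pf Q(4,1)] Q(2) a by simp
  show False
  proof (cases "\<forall>j<r. n j = 0")
    case True
    then have "alpha r mom n n = 1"
      using msum_eq_0_iff_nonneg[OF n] by (simp add: alpha_def Phi_def lone_def)
    then show False using a by simp
  next
    case False
    then obtain j where j: "j < r" "n j \<noteq> 0" by blast
    have "Mfun mom j (Q * monom 1 (nat (n j))) = 2 * Lw mom j ?P (- n j)"
      by (rule Mfun_lsym_Phi_diag[OF n j(1) Q(3)])
    then show False using \<open>Q = 0\<close> Lw_Phi_diag_nonzero[OF n j(1)] by simp
  qed
qed

lemma perfect_if_perfect_decr:
  assumes n: "nonneg r n" and j: "j < r" "1 \<le> n j" and pf: "perfect (decr n j)"
  shows "perfect n"
  unfolding perfect_def
proof (intro allI impI)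
  fix D assume D: "degree D < nat (msum r n) \<and> M_orth n D"
  let ?m = "decr n j"
  let ?N = "nat (msum r ?m)"
  have m: "nonneg r ?m" by (rule nonneg_decr[OF n j(2)])
  have NN: "nat (msum r n) = Suc ?N" using msum_decr[OF j(1)] msum_nonneg[OF m] by simp
  obtain Q where Q: "degree Q \<le> ?N" "coeff Q ?N = 1 + alpha r mom ?m ?m"
    "subst_wpw Q = lsym (Phi r mom ?m ?m)" "M_orth ?m Q"
    using lsym_Phi_eq_subst_wpw[OF m is_Phi_diag[OF m]] by (auto simp: alpha_def)
  have a: "1 + alpha r mom ?m ?m \<noteq> 0" by (rule one_plus_alpha_nonzero_if_perfect[OF m pf])
  define c where "c = coeff D ?N / (1 + alpha r mom ?m ?m)"
  have MD: "M_orth ?m D" using D unfolding M_orth_def by (auto simp: decr_apply)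
  have "D - smult c Q = 0"
  proof (rule perfectD[OF pf M_orth_diff[OF MD M_orth_smult[OF Q(4)]]])
    have "degree D \<le> ?N" using D NN by simp
    then show "degree (D - smult c Q) \<le> ?N"
      using Q(1) degree_smult_le[of c Q] by (intro degree_diff_le) auto
    show "coeff (D - smult c Q) ?N = 0" using Q(2) a by (simp add: c_def)
  qed
  then have Dc: "D = smult c Q" by simp
  have "int (nat (?m j)) < n j" using m j unfolding nonneg_def by (simp add: decr_apply)
  then have "Mfun mom j (D * monom 1 (nat (?m j))) = 0" using D j(1) unfolding M_orth_def by blast
  then have "c * (2 * Lw mom j (Phi r mom ?m ?m) (- ?m j)) = 0"
    using Mfun_lsym_Phi_diag[OF m j(1) Q(3)] Dc by (simp add: Mfun_smult)
  then have "c = 0" using Lw_Phi_diag_nonzero[OF m j(1)] by simp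
  then show "D = 0" using Dc by simp
qed

lemma perfect: "nonneg r n \<Longrightarrow> perfect n"
proof (induction "nat (msum r n)" arbitrary: n rule: less_induct)
  case less
  show ?case
  proof (cases "\<forall>j<r. n j = 0")
    case True
    then show ?thesis using msum_eq_0_iff_nonneg[OF less.prems] by (simp add: perfect_def)
  next
    case False
    then obtain j where j: "j < r" "1 \<le> n j" using less.prems unfolding nonneg_def by force
    have "perfect (decr n j)"
      using less.hyps[OF _ nonneg_decr[OF less.prems j(2)]] msum_decr[OF j(1)]
        msum_nonneg[OF nonneg_decr[OF less.prems j(2)]] by simp
    then show ?thesis using perfect_if_perfect_decr[OF less.prems j] by blast
  qed
qed

lemma one_plus_alpha_diag_nonzero: "nonneg r n \<Longrightarrow> 1 + alpha r mom n n \<noteq> 0"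
  using one_plus_alpha_nonzero_if_perfect perfect by blast

lemma Pn_eqI:
  assumes n: "nonneg r n" and P: "degree P = nat (msum r n)" "lead_coeff P = 1" "M_orth n P"
  shows "Pn r mom n = P"
proof -
  have unique: "P' = P"
    if P': "degree P' = nat (msum r n)" "lead_coeff P' = 1" "M_orth n P'" for P'
  proof -
    have "degree (P' - P) \<le> nat (msum r n)" using P P' by (intro degree_diff_le) simp_all
    moreover have "coeff (P' - P) (nat (msum r n)) = 0" using P P' by simp
    ultimately have "P' - P = 0"
      using perfectD[OF perfect[OF n] M_orth_diff[OF P'(3) P(3)]] by blast
    then show ?thesis by simp
  qed
  have "Pn r mom n = (THE P. degree P = nat (msum r n) \<and> lead_coeff P = 1 \<and> M_orth n P)"
    by (simp add: Pn_def M_orth_def)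
  also have "\<dots> = P" using P unique by (intro the_equality) blast+
  finally show ?thesis .
qed

lemma subst_wpw_Pn:
  assumes n: "nonneg r n" and p: "is_Phi r mom n m p"
    and m: "\<And>i. i < r \<Longrightarrow> n i - 1 \<le> m i" "msum r m \<le> msum r n"
    and c: "1 + p (- msum r n) \<noteq> 0"
  shows "subst_wpw (smult (1 + p (- msum r n)) (Pn r mom n)) = lsym p"
proof -
  let ?N = "nat (msum r n)" and ?c = "1 + p (- msum r n)"
  obtain Q where Q: "degree Q \<le> ?N" "coeff Q ?N = ?c" "subst_wpw Q = lsym p" "M_orth n Q"
    using lsym_Phi_eq_subst_wpw[OF n p m] by blast
  have "degree Q = ?N" using Q(1,2) c le_degree[of Q ?N] by simp
  then have "Pn r mom n = smult (inverse ?c) Q"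
    using Q(2,4) c by (intro Pn_eqI[OF n]) (simp_all add: M_orth_smult)
  then show ?thesis using Q(3) c by simp
qed

lemma Pn_props:
  assumes "nonneg r n"
  shows "degree (Pn r mom n) = nat (msum r n)" "lead_coeff (Pn r mom n) = 1" "M_orth n (Pn r mom n)"
proof -
  let ?c = "1 + alpha r mom n n"
  obtain Q where Q: "degree Q \<le> nat (msum r n)" "coeff Q (nat (msum r n)) = ?c" "M_orth n Q"
    using lsym_Phi_eq_subst_wpw[OF assms is_Phi_diag[OF assms]] by (auto simp: alpha_def)
  have c: "?c \<noteq> 0" by (rule one_plus_alpha_diag_nonzero[OF assms])
  have "degree Q = nat (msum r n)" using Q(1,2) c le_degree[of Q "nat (msum r n)"] by simp
  then have "Pn r mom n = smult (inverse ?c) Q"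
    using Q(2,3) c by (intro Pn_eqI[OF assms]) (simp_all add: M_orth_smult)
  then show "degree (Pn r mom n) = nat (msum r n)" "lead_coeff (Pn r mom n) = 1"
    "M_orth n (Pn r mom n)"
    using Q(2,3) c \<open>degree Q = _\<close> by (simp_all add: M_orth_smult)
qed

lemma Mfun_Pn_edge:
  assumes n: "nonneg r n" and j: "j < r"
  shows "(1 + alpha r mom n n) * Mfun mom j (Pn r mom n * monom 1 (nat (n j)))
         = 2 * Lw mom j (Phi r mom n n) (- n j)"
proof -
  have "subst_wpw (smult (1 + alpha r mom n n) (Pn r mom n)) = lsym (Phi r mom n n)"
    using subst_wpw_Pn[OF n is_Phi_diag[OF n]] one_plus_alpha_diag_nonzero[OF n]
    by (simp add: alpha_def)
  from Mfun_lsym_Phi_diag[OF n j this] show ?thesis by (simp add: Mfun_smult)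
qed

section \<open>The recurrence coefficients\<close>

lemma Lw_lflip_Phi_decr_fst:
  assumes n: "nonneg r n" and i: "i < r" and k: "- n i \<le> k" "k \<le> n i - 1"
    and l: "l \<in> active r n"
  shows "Lw mom i (lflip (Phi r mom (decr n l) n)) (- k)
    = (if l = i \<and> k = - n i then Lw mom i (Phi r mom (decr n i) n) (1 - n i) else 0)"
proof -
  have G: "is_Phi r mom (decr n l) n (Phi r mom (decr n l) n)"
    using is_Phi_decr_fst[OF n] l by (auto simp: active_def)
  have eq: "Lw mom i (lflip (Phi r mom (decr n l) n)) (- k)
      = Lw mom i (Phi r mom (decr n l) n) (1 + k)"
    using Lw_lflip_mom[OF i is_PhiD(4)[OF G]] by simp
  show ?thesis
  proof (cases "l = i \<and> k = - n i")
    case False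
    then have "- 1 - k \<le> decr n l i - 1" using k by (auto simp: decr_apply)
    then have "Lw mom i (lflip (Phi r mom (decr n l) n)) (- k) = 0"
      using eq orthD[OF is_PhiD(3)[OF G] i, of "- 1 - k"] k by (simp add: add.commute)
    with False show ?thesis by auto
  qed (use eq in simp)
qed

lemma lflip_Phi_decr_fst:
  assumes n: "nonneg r n" and l: "l \<in> active r n"
  shows "supp_within (lflip (Phi r mom (decr n l) n)) (- msum r n) (msum r n - 1)"
    and "lflip (Phi r mom (decr n l) n) (- msum r n) = 1"
proof -
  have l': "l < r" "1 \<le> n l" using l by (auto simp: active_def)
  have G: "is_Phi r mom (decr n l) n (Phi r mom (decr n l) n)" by (rule is_Phi_decr_fst[OF n l'])
  show "supp_within (lflip (Phi r mom (decr n l) n)) (- msum r n) (msum r n - 1)"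
    using supp_within_lflip[OF is_PhiD(1)[OF G]] msum_decr[OF l'(1)] by simp
  show "lflip (Phi r mom (decr n l) n) (- msum r n) = 1"
    using is_PhiD(2)[OF G] msum_decr[OF l'(1)] by (simp add: lflip_def)
qed

text \<open>Let \<open>Q\<close> be supported in \<open>[-|n|, |n|]\<close> and satisfy the conditions of \<open>(n; n)\<close> except
  the extreme ones \<open>L\<^sub>l[Q w\<^bsup>-n\<^sub>l\<^esup>] = 0\<close>. Subtracting from \<open>Q(1/w)\<close> suitable multiples of
  the flips of the \<open>\<Phi>\<^bsub>n-e\<^sub>l;n\<^esub>\<close> and of \<open>\<Phi>\<^bsub>n;n\<^esub>\<close> leaves a solution of the homogeneous
  \<open>(n; n)\<close> system; its coefficient at \<open>w\<^bsup>-|n|\<^esup>\<close> gives \<open>top_coeff_eq\<close>.\<close>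

definition reflect_residual :: "(nat \<Rightarrow> int) \<Rightarrow> (int \<Rightarrow> complex) \<Rightarrow> int \<Rightarrow> complex" where
  "reflect_residual n Q = (\<lambda>k. Q (- k)
    - (\<Sum>l\<in>active r n. Lw mom l Q (- n l) / Lw mom l (Phi r mom (decr n l) n) (1 - n l)
        * lflip (Phi r mom (decr n l) n) k)
    - Q (- msum r n) * Phi r mom n n k)"

lemma supp_within_reflect_residual:
  assumes n: "nonneg r n" and Q: "supp_within Q (- msum r n) (msum r n)"
  shows "supp_within (reflect_residual n Q) (- msum r n) (msum r n - 1)"
proof -
  let ?N = "msum r n" and ?P = "Phi r mom n n"
  have P: "is_Phi r mom n n ?P" by (rule is_Phi_diag[OF n])
  have "reflect_residual n Q k = 0" if out: "k < - ?N \<or> ?N - 1 < k" for k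
  proof -
    have "lflip (Phi r mom (decr n l) n) k = 0" if "l \<in> active r n" for l
      using supp_within_outside[OF lflip_Phi_decr_fst(1)[OF n that]] out by blast
    moreover have "Q (- k) = Q (- ?N) * ?P k"
    proof -
      consider "k < - ?N" | "k = ?N" | "?N < k" using out by linarith
      then show ?thesis
      proof cases
        case 2
        then show ?thesis using is_PhiD(2)[OF P] by simp
      qed (use supp_within_outside[OF Q, of "- k"]
          supp_within_outside[OF is_PhiD(1)[OF P], of k] in simp)+
    qed
    ultimately show ?thesis by (simp add: reflect_residual_def)
  qed
  then show ?thesis unfolding supp_within_def by force
qed

lemma orth_reflect_residual:
  assumes n: "nonneg r n"
    and Q: "supp_within Q (- msum r n) (msum r n)" "orth r mom n (\<lambda>i. n i - 1) Q"
  shows "orth r mom n n (reflect_residual n Q)"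
  unfolding orth_def
proof (intro allI impI)
  let ?I = "active r n" and ?P = "Phi r mom n n" and ?G = "\<lambda>l. Phi r mom (decr n l) n"
  let ?c = "\<lambda>l. Lw mom l Q (- n l) / Lw mom l (?G l) (1 - n l)"
  fix i k assume i: "i < r" and k: "- n i \<le> k \<and> k \<le> n i - 1"
  have P: "is_Phi r mom n n ?P" by (rule is_Phi_diag[OF n])
  have fG: "finsupp (lflip (?G l))" if "l \<in> ?I" for l
    using finsupp_supp_within[OF lflip_Phi_decr_fst(1)[OF n that]] .
  have "(\<Sum>l\<in>?I. ?c l * Lw mom i (lflip (?G l)) (- k))
        = (\<Sum>l\<in>?I. if l = i then (if k = - n i then ?c i * Lw mom i (?G i) (1 - n i) else 0) else 0)"
    using Lw_lflip_Phi_decr_fst[OF n i] k by (intro sum.cong) auto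
  also have "\<dots> = (if k = - n i then ?c i * Lw mom i (?G i) (1 - n i) else 0)"
    using i k by (auto simp: active_def)
  finally have sel: "(\<Sum>l\<in>?I. ?c l * Lw mom i (lflip (?G l)) (- k))
    = (if k = - n i then Lw mom i Q (- n i) else 0)"
    using Lw_Phi_decr_fst_nonzero[OF n i] i k by auto
  have "Lw mom i Q k = 0" if "k \<noteq> - n i"
    using orthD[OF Q(2) i, of "- k"] k that by simp
  moreover have "Lw mom i ?P (- k) = 0" using orthD[OF is_PhiD(3)[OF P] i] k by simp
  moreover have "Lw mom i (reflect_residual n Q) (- k) = Lw mom i Q k
    - (\<Sum>l\<in>?I. ?c l * Lw mom i (lflip (?G l)) (- k)) - Q (- msum r n) * Lw mom i ?P (- k)"
    using finsupp_supp_within[OF Q(1)] fG is_PhiD(4)[OF P]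
    by (simp add: reflect_residual_def Lw_reflect_mom[OF i] del: times_divide_eq_left)
  ultimately show "Lw mom i (reflect_residual n Q) (- k) = 0" using sel by auto
qed

lemma top_coeff_eq:
  assumes n: "nonneg r n"
    and Q: "supp_within Q (- msum r n) (msum r n)" "orth r mom n (\<lambda>i. n i - 1) Q"
  shows "Q (msum r n) - (\<Sum>l\<in>active r n.
      Lw mom l Q (- n l) / Lw mom l (Phi r mom (decr n l) n) (1 - n l))
    = Q (- msum r n) * alpha r mom n n"
proof -
  have "reflect_residual n Q (- msum r n) = 0"
    using orth_trivialD[OF orth_trivial_diag[OF n] supp_within_reflect_residual[OF n Q(1)]
        orth_reflect_residual[OF n Q]] .
  then show ?thesis
    using lflip_Phi_decr_fst(2)[OF n] by (simp add: reflect_residual_def alpha_def)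
qed

lemma Phi_incr_fst_diff:
  assumes n: "nonneg r n" and l: "l < r" and j: "j < r"
  defines "U \<equiv> \<lambda>i. Phi r mom (incr n i) n"
  shows "U l = (\<lambda>k. U j k + (U l (msum r n) - U j (msum r n)) * Phi r mom n n k)"
proof -
  let ?N = "msum r n" and ?P = "Phi r mom n n"
  define c where "c = U l ?N - U j ?N"
  define D where "D = (\<lambda>k. 1 * (\<lambda>k. 1 * U l k + (- 1) * U j k) k + (- c) * ?P k)"
  have U: "is_Phi r mom (incr n i) n (U i)" if "i < r" for i
    unfolding U_def by (rule is_Phi_incr_fst[OF n that])
  have P: "is_Phi r mom n n ?P" by (rule is_Phi_diag[OF n])
  have sU: "supp_within (U i) (- ?N) (?N + 1)" if "i < r" for i
    using is_PhiD(1)[OF U[OF that]] msum_incr[OF that] by simp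
  have "supp_within D (- ?N) (?N + 1)"
    unfolding D_def using sU[OF l] sU[OF j] supp_within_mono[OF is_PhiD(1)[OF P]]
    by (intro supp_within_lincomb) auto
  moreover have "D (?N + 1) = 0"
    using is_PhiD(2)[OF U[OF l]] is_PhiD(2)[OF U[OF j]] msum_incr[OF l] msum_incr[OF j]
      supp_within_outside[OF is_PhiD(1)[OF P], of "?N + 1"]
    by (simp add: D_def)
  ultimately have "supp_within D (- ?N) ?N" using supp_within_shrink_right by fastforce
  moreover have "D ?N = 0" using is_PhiD(2)[OF P] by (simp add: D_def c_def)
  ultimately have "supp_within D (- ?N) (?N - 1)" by (rule supp_within_shrink_right)
  moreover have "orth r mom n n D"
  proof -
    have "orth r mom n n (U i)" if "i < r" for i
      using orth_mono[OF is_PhiD(3)[OF U[OF that]], of n n] by (simp add: incr_apply)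
    then show ?thesis unfolding D_def
      using l j is_PhiD(3,4)[OF P] is_PhiD(4)[OF U[OF l]] is_PhiD(4)[OF U[OF j]]
      by (intro orth_lincomb finsupp_lincomb) auto
  qed
  ultimately have "D k = 0" for k using orth_trivialD[OF orth_trivial_diag[OF n]] by blast
  then show ?thesis by (auto simp: D_def c_def fun_eq_iff algebra_simps)
qed

lemma Lw_Phi_incr_fst:
  assumes n: "nonneg r n" and i: "i < r" and j: "j < r"
  shows "Lw mom i (Phi r mom (incr n j) n) (- n i)
    = (Phi r mom (incr n j) n (msum r n) - Phi r mom (incr n i) n (msum r n))
      * Lw mom i (Phi r mom n n) (- n i)"
proof -
  have Ui: "is_Phi r mom (incr n i) n (Phi r mom (incr n i) n)" by (rule is_Phi_incr_fst[OF n i])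
  define c where
    "c = Phi r mom (incr n j) n (msum r n) - Phi r mom (incr n i) n (msum r n)"
  have "Phi r mom (incr n j) n = (\<lambda>k. Phi r mom (incr n i) n k + c * Phi r mom n n k)"
    using Phi_incr_fst_diff[OF n j i] by (simp add: c_def)
  moreover have "Lw mom i (Phi r mom (incr n i) n) (- n i) = 0"
    using orthD[OF is_PhiD(3)[OF Ui] i, of "n i"] n i by (simp add: incr_apply nonneg_def)
  ultimately have "Lw mom i (Phi r mom (incr n j) n) (- n i) = c * Lw mom i (Phi r mom n n) (- n i)"
    using is_PhiD(4)[OF Ui] is_PhiD(4)[OF is_Phi_diag[OF n]] by simp
  then show ?thesis unfolding c_def .
qed

lemma rho_diag:
  assumes n: "nonneg r n" and l: "l < r"
  shows "rho r mom n n l = (if l \<in> active r n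
    then Lw mom l (Phi r mom n n) (- n l) / Lw mom l (Phi r mom (decr n l) n) (1 - n l) else 0)"
proof -
  have "(\<forall>i<r. 0 \<le> decr n l i + n i) \<longleftrightarrow> 1 \<le> n l"
    using n l unfolding nonneg_def by (force simp: decr_apply)
  then show ?thesis using l by (simp add: rho_def active_def Lw_def algebra_simps)
qed

lemma gamma_diag:
  assumes n: "nonneg r n" and l: "l < r" and j: "j < r"
  shows "gamma r mom n n l j
    = Phi r mom (incr n l) n (msum r n) - Phi r mom (incr n j) n (msum r n)"
  using Lw_Phi_incr_fst[OF n j l] Lw_Phi_diag_nonzero[OF n j]
  by (simp add: gamma_def Lw_def[symmetric])

lemma shift_Phi_diag_minus_Phi_incr_fst:
  assumes n: "nonneg r n" and j: "j < r"
  defines "Q \<equiv> \<lambda>k. lshift (Phi r mom n n) 1 k - Phi r mom (incr n j) n k"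
  shows "supp_within Q (- msum r n) (msum r n)" and "orth r mom n (\<lambda>i. n i - 1) Q"
proof -
  let ?N = "msum r n" and ?P = "Phi r mom n n" and ?U = "Phi r mom (incr n j) n"
  have P: "is_Phi r mom n n ?P" by (rule is_Phi_diag[OF n])
  have U: "is_Phi r mom (incr n j) n ?U" by (rule is_Phi_incr_fst[OF n j])
  have Q: "Q = (\<lambda>k. 1 * lshift ?P 1 k + (- 1) * ?U k)" by (simp add: Q_def)
  have "supp_within Q (- ?N) (?N + 1)"
    unfolding Q
    using supp_within_mono[OF supp_within_lshift[OF is_PhiD(1)[OF P], of 1]] is_PhiD(1)[OF U]
      msum_incr[OF j]
    by (intro supp_within_lincomb) auto
  moreover have "Q (?N + 1) = 0"
    using is_PhiD(2)[OF P] is_PhiD(2)[OF U] msum_incr[OF j] by (simp add: Q_def lshift_def)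
  ultimately show "supp_within Q (- ?N) ?N" using supp_within_shrink_right by fastforce
  have "orth r mom n (\<lambda>i. n i - 1) (lshift ?P 1)"
    unfolding orth_def
  proof (intro allI impI)
    fix i k assume "i < r" "- (n i - 1) \<le> k \<and> k \<le> n i - 1"
    then show "Lw mom i (lshift ?P 1) (- k) = 0"
      using orthD[OF is_PhiD(3)[OF P], of i "k - 1"] by (simp add: Lw_lshift)
  qed
  moreover have "orth r mom n (\<lambda>i. n i - 1) ?U"
    using orth_mono[OF is_PhiD(3)[OF U]] by (simp add: incr_apply)
  ultimately show "orth r mom n (\<lambda>i. n i - 1) Q"
    unfolding Q using is_PhiD(4)[OF P] is_PhiD(4)[OF U] by (intro orth_lincomb) auto
qed

lemma sum_rho_gamma:
  assumes n: "nonneg r n" and j: "j < r"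
  shows "(\<Sum>l\<in>{..<r} - {j}. rho r mom n n l * gamma r mom n n l j)
    = Phi r mom n n (msum r n - 1) - Phi r mom (incr n j) n (msum r n)
      + alpha r mom n n * alpha r mom (incr n j) n"
proof -
  let ?N = "msum r n" and ?P = "Phi r mom n n" and ?U = "Phi r mom (incr n j) n"
  define Q where "Q = (\<lambda>k. lshift ?P 1 k - ?U k)"
  have P: "is_Phi r mom n n ?P" by (rule is_Phi_diag[OF n])
  have "Lw mom i Q (- n i) / Lw mom i (Phi r mom (decr n i) n) (1 - n i)
        = rho r mom n n i * gamma r mom n n i j" if i: "i \<in> active r n" for i
  proof -
    have i': "i < r" "1 \<le> n i" using i by (auto simp: active_def)
    have "Lw mom i ?P (1 - n i) = 0"
      using orthD[OF is_PhiD(3)[OF P] i'(1), of "n i - 1"] i' n by (simp add: nonneg_def)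
    then have "Lw mom i Q (- n i) = - Lw mom i ?U (- n i)"
      using is_PhiD(4)[OF P] is_PhiD(4)[OF is_Phi_incr_fst[OF n j]] by (simp add: Q_def Lw_lshift)
    also have "\<dots> = gamma r mom n n i j * Lw mom i ?P (- n i)"
      unfolding Lw_Phi_incr_fst[OF n i'(1) j] gamma_diag[OF n i'(1) j] by (simp add: algebra_simps)
    finally show ?thesis using rho_diag[OF n i'(1)] i by simp
  qed
  then have "(\<Sum>l\<in>active r n. rho r mom n n l * gamma r mom n n l j)
    = Q ?N - Q (- ?N) * alpha r mom n n"
    using top_coeff_eq[OF n shift_Phi_diag_minus_Phi_incr_fst[OF n j]]
    by (simp add: Q_def algebra_simps)
  also have "\<dots> = ?P (?N - 1) - ?U ?N + alpha r mom n n * alpha r mom (incr n j) n"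
    using supp_within_outside[OF is_PhiD(1)[OF P], of "- ?N - 1"]
    by (simp add: Q_def lshift_def alpha_def)
  also have "(\<Sum>l\<in>active r n. rho r mom n n l * gamma r mom n n l j)
    = (\<Sum>l\<in>{..<r} - {j}. rho r mom n n l * gamma r mom n n l j)"
    using rho_diag[OF n] gamma_diag[OF n j j] j
    by (intro sum.mono_neutral_cong) (auto simp: active_def)
  finally show ?thesis .
qed

lemma Pm_nonneg: "nonneg r n \<Longrightarrow> Pm r mom n = Pn r mom n"
  by (simp add: Pm_def nonneg_def)

lemma Pm_decr:
  "nonneg r n \<Longrightarrow> l < r \<Longrightarrow> Pm r mom (decr n l) = (if 1 \<le> n l then Pn r mom (decr n l) else 0)"
  using nonneg_decr_iff[of r n l] by (simp add: Pm_def nonneg_def[symmetric])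

lemma coeff_Pn_below_top:
  assumes n: "nonneg r n" and j: "j < r" and nj: "1 \<le> n j"
  shows "coeff (Pn r mom n) (nat (msum r n) - 1)
    = Phi r mom n n (msum r n - 1) - alpha r mom n n * alpha r mom (decr n j) n
      + alpha r mom n (decr n j)"
proof -
  let ?N = "msum r n" and ?V = "Phi r mom n (decr n j)"
  have N: "1 \<le> ?N" using component_le_msum[OF n j] nj by simp
  have V: "is_Phi r mom n (decr n j) ?V" by (rule is_Phi_decr_snd[OF n j nj])
  have sm: "msum r (decr n j) = ?N - 1" by (rule msum_decr[OF j])
  have "?V (- ?N) = 0" using supp_within_outside[OF is_PhiD(1)[OF V], of "- ?N"] sm by simp
  then have "subst_wpw (Pn r mom n) = lsym ?V"
    using subst_wpw_Pn[OF n V] sm by (simp add: decr_apply)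
  moreover have "degree (Pn r mom n) \<le> Suc (nat ?N - 1)" using Pn_props(1)[OF n] by simp
  ultimately have "coeff (Pn r mom n) (nat ?N - 1) = lsym ?V (?N - 1)"
    using subst_wpw_coeff[of "Pn r mom n" "nat ?N - 1"] N by simp
  also have "\<dots> = ?V (?N - 1) + alpha r mom n (decr n j)"
    using sm by (simp add: lsym_def alpha_def)
  also have "?V (?N - 1) = Phi r mom n n (?N - 1) - alpha r mom n n * alpha r mom (decr n j) n"
    by (simp add: Phi_decr_snd_eq[OF n j nj] lflip_def alpha_def)
  finally show ?thesis .
qed

lemma coeff_Pn_incr_fst:
  assumes n: "nonneg r n" and j: "j < r"
  shows "coeff (Pn r mom (incr n j)) (nat (msum r n))
    = Phi r mom (incr n j) n (msum r n) + alpha r mom (incr n j) n"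
proof -
  let ?N = "msum r n" and ?U = "Phi r mom (incr n j) n"
  have U: "is_Phi r mom (incr n j) n ?U" by (rule is_Phi_incr_fst[OF n j])
  have n': "nonneg r (incr n j)" by (rule nonneg_incr[OF n])
  have sp: "msum r (incr n j) = ?N + 1" by (rule msum_incr[OF j])
  have "?U (- (?N + 1)) = 0" using supp_within_outside[OF is_PhiD(1)[OF U], of "- ?N - 1"] by simp
  then have "subst_wpw (Pn r mom (incr n j)) = lsym ?U"
    using subst_wpw_Pn[OF n' U] sp by (simp add: incr_apply)
  moreover have "degree (Pn r mom (incr n j)) \<le> Suc (nat ?N)"
    using Pn_props(1)[OF n'] sp msum_nonneg[OF n] by simp
  ultimately have "coeff (Pn r mom (incr n j)) (nat ?N) = lsym ?U ?N"
    using subst_wpw_coeff[of "Pn r mom (incr n j)" "nat ?N"] msum_nonneg[OF n] by simp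
  then show ?thesis by (simp add: lsym_def alpha_def)
qed

context
  fixes n :: "nat \<Rightarrow> int" and j :: nat and a :: "nat \<Rightarrow> complex" and b :: complex
  assumes n: "nonneg r n" and j: "j < r" and nj: "1 \<le> n j"
    and recurrence: "[:0, 1:] * Pm r mom n = Pm r mom (incr n j) + smult b (Pm r mom n)
      + (\<Sum>l<r. smult (a l) (Pm r mom (decr n l)))"
begin

lemma recurrence_coeff:
  "b = coeff (Pn r mom n) (nat (msum r n) - 1) - coeff (Pn r mom (incr n j)) (nat (msum r n))"
proof -
  define M where "M = nat (msum r n) - 1"
  have M: "nat (msum r n) = Suc M" using component_le_msum[OF n j] nj by (simp add: M_def)
  have "coeff (Pm r mom (decr n l)) (Suc M) = 0" if l: "l < r" for l
  proof (cases "1 \<le> n l")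
    case True
    then have "degree (Pn r mom (decr n l)) = M"
      using Pn_props(1)[OF nonneg_decr[OF n True]] msum_decr[OF l] M by simp
    then show ?thesis using Pm_decr[OF n l] True by (simp add: coeff_eq_0)
  qed (use Pm_decr[OF n l] in simp)
  then have "(\<Sum>l<r. a l * coeff (Pm r mom (decr n l)) (Suc M)) = 0" by simp
  moreover have "coeff (Pn r mom n) (Suc M) = 1" using Pn_props(1,2)[OF n] M by simp
  moreover have "coeff ([:0, 1:] * Pm r mom n) (Suc M) = coeff (Pm r mom (incr n j)) (Suc M)
      + b * coeff (Pm r mom n) (Suc M) + (\<Sum>l<r. a l * coeff (Pm r mom (decr n l)) (Suc M))"
    unfolding recurrence by (simp only: coeff_add coeff_smult coeff_sum)
  moreover have "coeff ([:0, 1:] * Pm r mom n) (Suc M) = coeff (Pn r mom n) M"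
    using Pm_nonneg[OF n] by simp
  ultimately show ?thesis
    using M Pm_nonneg[OF n] Pm_nonneg[OF nonneg_incr[OF n]] by simp
qed

lemma recurrence_Mfun:
  "Mfun mom j (Pn r mom n * monom 1 (nat (n j)))
    = a j * Mfun mom j (Pn r mom (decr n j) * monom 1 (nat (n j) - 1))"
proof -
  define K where "K = nat (n j) - 1"
  have K: "nat (n j) = Suc K" "int K < n j" using nj by (auto simp: K_def)
  have "Mfun mom j (Pn r mom n * monom 1 (nat (n j)))
      = Mfun mom j ([:0, 1:] * Pm r mom n * monom 1 K)"
    using Pm_nonneg[OF n] K by (simp add: monom_Suc algebra_simps)
  also have "\<dots> = Mfun mom j (Pn r mom (incr n j) * monom 1 K)
      + b * Mfun mom j (Pn r mom n * monom 1 K) + (\<Sum>l<r. a l * Mfun mom j (Pm r mom (decr n l) * monom 1 K))"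
    unfolding recurrence using Pm_nonneg[OF n] Pm_nonneg[OF nonneg_incr[OF n]]
    by (simp add: distrib_right sum_distrib_right Mfun_add Mfun_smult Mfun_sum)
  also have "Mfun mom j (Pn r mom (incr n j) * monom 1 K) = 0"
    using Pn_props(3)[OF nonneg_incr[OF n]] j K by (simp add: M_orth_def incr_apply)
  also have "Mfun mom j (Pn r mom n * monom 1 K) = 0"
    using Pn_props(3)[OF n] j K by (simp add: M_orth_def)
  also have "(\<Sum>l<r. a l * Mfun mom j (Pm r mom (decr n l) * monom 1 K))
    = a j * Mfun mom j (Pm r mom (decr n j) * monom 1 K)
      + (\<Sum>l\<in>{..<r} - {j}. a l * Mfun mom j (Pm r mom (decr n l) * monom 1 K))"
    using j by (simp add: sum.remove)
  also have "(\<Sum>l\<in>{..<r} - {j}. a l * Mfun mom j (Pm r mom (decr n l) * monom 1 K)) = 0"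
  proof (rule sum.neutral, intro ballI)
    fix l assume l: "l \<in> {..<r} - {j}"
    show "a l * Mfun mom j (Pm r mom (decr n l) * monom 1 K) = 0"
      using Pm_decr[OF n, of l] Pn_props(3)[OF nonneg_decr[OF n]] j K l
      by (auto simp: M_orth_def decr_apply)
  qed
  finally show ?thesis using Pm_decr[OF n j] nj by (simp add: K_def)
qed

lemma recurrence_b:
  "b = (\<Sum>l\<in>{..<r} - {j}. rho r mom n n l * gamma r mom n n l j)
     + alpha r mom n (decr n j) - alpha r mom (incr n j) n
     - alpha r mom n n * alpha r mom (decr n j) n - alpha r mom n n * alpha r mom (incr n j) n"
  unfolding sum_rho_gamma[OF n j] recurrence_coeff coeff_Pn_below_top[OF n j nj]
    coeff_Pn_incr_fst[OF n j]
  by (simp add: algebra_simps)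

lemma recurrence_a:
  "a j = (1 + alpha r mom (decr n j) (decr n j)) * (1 - (alpha r mom (decr n j) n)\<^sup>2)
     * rho r mom n n j / (1 + alpha r mom n n)"
proof -
  let ?m = "decr n j"
  define A A' B where "A = 1 + alpha r mom n n" and "A' = 1 + alpha r mom ?m ?m"
    and "B = 1 - (alpha r mom ?m n)\<^sup>2"
  define Z Z' where "Z = Lw mom j (Phi r mom n n) (- n j)"
    and "Z' = Lw mom j (Phi r mom ?m ?m) (1 - n j)"
  define X X' where "X = Mfun mom j (Pn r mom n * monom 1 (nat (n j)))"
    and "X' = Mfun mom j (Pn r mom ?m * monom 1 (nat (n j) - 1))"
  have m: "nonneg r ?m" by (rule nonneg_decr[OF n nj])
  have A: "A \<noteq> 0" "A' \<noteq> 0"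
    using one_plus_alpha_diag_nonzero[OF n] one_plus_alpha_diag_nonzero[OF m]
    by (simp_all add: A_def A'_def)
  have Z': "Z' \<noteq> 0" using Lw_Phi_diag_nonzero[OF m j] by (simp add: Z'_def decr_apply)
  have X: "A * X = 2 * Z" using Mfun_Pn_edge[OF n j] by (simp add: A_def X_def Z_def)
  have X': "A' * X' = 2 * Z'"
    using Mfun_Pn_edge[OF m j] nj by (simp add: A'_def X'_def Z'_def decr_apply nat_diff_distrib)
  have rec: "X = a j * X'" using recurrence_Mfun by (simp add: X_def X'_def)
  have "2 * (A * Z' * a j) = A * (A' * X') * a j" by (simp add: X')
  also have "\<dots> = A' * (A * (a j * X'))" by (simp only: mult_ac)
  also have "\<dots> = 2 * (A' * Z)" using X by (simp add: rec[symmetric])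
  finally have "a j = A' * Z / (A * Z')" using A Z' by (simp add: field_simps)
  moreover have "rho r mom n n j = Z / (B * Z')" "B * Z' \<noteq> 0"
    using rho_diag[OF n j] Lw_Phi_decr_fst[OF n j nj] Lw_Phi_decr_fst_nonzero[OF n j nj] j nj
    by (simp_all add: active_def B_def Z_def Z'_def)
  ultimately have "a j = A' * (B * Z' * rho r mom n n j) / (A * Z')" by simp
  also have "\<dots> = A' * B * rho r mom n n j / A" using A Z' by (simp add: field_simps)
  finally show ?thesis by (simp add: A_def A'_def B_def)
qed

end

end

lemma uminus_invariant_of_nat:
  assumes "\<forall>k::nat. f (int k) = (f (- int k) :: complex)"
  shows "f (- k) = f k"
  using assms[rule_format, of "nat \<bar>k\<bar>"] by (cases "k \<ge> 0") auto

theorem theorem10p3: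
  fixes r :: nat and mom :: "nat \<Rightarrow> int \<Rightarrow> complex"
    and a b :: "(nat \<Rightarrow> int) \<Rightarrow> nat \<Rightarrow> complex"
  assumes r: "r \<ge> 1"
    and sym: "\<forall>j<r. \<forall>k::nat. mom j (int k) = mom j (- int k)"
    and norm: "\<forall>n. (\<forall>i<r. 0 \<le> n i) \<longrightarrow>
                 normal r mom n n \<and> (\<forall>j<r. normal r mom (madd n (unitv j)) n)"
    and rec: "\<forall>n. (\<forall>i<r. 0 \<le> n i) \<longrightarrow> (\<forall>k<r.
                 [:0, 1:] * Pm r mom n = Pm r mom (madd n (unitv k)) + smult (b n k) (Pm r mom n)
                   + (\<Sum>j<r. smult (a n j) (Pm r mom (msub n (unitv j)))))"
  shows "\<forall>n. (\<forall>i<r. 0 \<le> n i) \<longrightarrow> (\<forall>j<r. n j \<ge> 1 \<longrightarrow>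
    a n j = (1 + alpha r mom (msub n (unitv j)) (msub n (unitv j)))
            * (1 - (alpha r mom (msub n (unitv j)) n)\<^sup>2) * rho r mom n n j
            / (1 + alpha r mom n n)
  \<and> b n j = (\<Sum>l\<in>{..<r} - {j}. rho r mom n n l * gamma r mom n n l j)
            + alpha r mom n (msub n (unitv j)) - alpha r mom (madd n (unitv j)) n
            - alpha r mom n n * alpha r mom (msub n (unitv j)) n
            - alpha r mom n n * alpha r mom (madd n (unitv j)) n)"
proof -
  interpret symmetric_normal r mom
    using sym norm uminus_invariant_of_nat by unfold_locales (auto simp: nonneg_def)
  show ?thesis
    using rec recurrence_a recurrence_b by (auto simp: nonneg_def)
qed

end
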